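(* Let $Y\in\mathbb{R}$, $Z\in\mathbb{R}^p$, $X=(X^{(1)},\dots,X^{(d)})\in\mathbb{R}^d$, $W\in\mathbb{R}^d$ be random variables/vectors with finite second moments; let $(\alpha,\beta_Z,\beta_X)=\arg\min_{a,b_Z,b_X}\mathbb{E}\big[\tfrac12(Y-a-Z^{\mathsf T}b_Z-X^{\mathsf T}b_X)^2\big]$. Let $(Y_i,Z_i,X_i,W_i)_{i=1}^N$ be samples satisfying: (i) they are identically distributed with the law of $(Y,Z,X,W)$ and their sample first and second moments converge in probability to the population moments as $N\to\infty$; (ii) $\varepsilon_i=Y_i-\alpha-Z_i^{\mathsf T}\beta_Z-X_i^{\mathsf T}\beta_X$ is uncorrelated with $W_i-X_i$; (iii) the covariance matrices of $(Z,W)$ and of $(Z,X)$ are positive definite. Let $\hat\beta_X^{(\mathrm{ME})}$ be the OLS coefficients of $W_i$ in the regression of $Y_i$ on an intercept, $Z_i$ and $W_i$, and $\mathrm{bias}^{(\mathrm{ME})}_{\beta_X}=\operatorname{plim}_{N\to\infty}(\hat\beta_X^{(\mathrm{ME})}-\beta_X)$. Suppose the entries of $X$ are exactly the pollutant concentrations, and assume: (Pairwise Partial $\mathrm{PC}_+$) for every $j\ne j'$, the partial correlation of $X^{(j)}$ and $X^{(j')}$ given all remaining entries of $(Z,X)$ is positive; (CUME) $W=X+E$ with $E$ independent of $(Z,X,Y)$ and $\mathrm{Cov}(E)=\mathrm{diag}(a_1,\dots,a_d)$, $a_j\ge0$; (No Benefit) $\beta_{X,j}\le 0$ for all $j$.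 If $\beta_{X,j}=0$ for some $j$, then $\big[\mathrm{bias}^{(\mathrm{ME})}_{\beta_X}\big]_j\le 0$.
   Context: Partial correlation of two entries of a random vector given other entries is the correlation of their population linear-regression residuals on those other entries. "plim" denotes limit in probability. *)

theory Defs
  imports "HOL-Probability.Probability"
begin

definition vcat :: "real^'m \<Rightarrow> real^'n \<Rightarrow> real^('m + 'n)" where
  "vcat x y = (\<chi> k. case k of Inl i \<Rightarrow> x $ i | Inr j \<Rightarrow> y $ j)"

definition rcov :: "'a measure \<Rightarrow> ('a \<Rightarrow> real) \<Rightarrow> ('a \<Rightarrow> real) \<Rightarrow> real" where
  "rcov M U V = (\<integral>\<omega>. U \<omega> * V \<omega> \<partial>M) - (\<integral>\<omega>. U \<omega> \<partial>M) * (\<integral>\<omega>. V \<omega> \<partial>M)"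

definition rcorr :: "'a measure \<Rightarrow> ('a \<Rightarrow> real) \<Rightarrow> ('a \<Rightarrow> real) \<Rightarrow> real" where
  "rcorr M U V = rcov M U V / sqrt (rcov M U U * rcov M V V)"

definition cov_mat :: "'a measure \<Rightarrow> ('a \<Rightarrow> real^'k) \<Rightarrow> real^'k^'k" where
  "cov_mat M V = (\<chi> i j. rcov M (\<lambda>\<omega>. V \<omega> $ i) (\<lambda>\<omega>. V \<omega> $ j))"

definition pos_def_mat :: "real^'k^'k \<Rightarrow> bool" where
  "pos_def_mat A \<longleftrightarrow> (\<forall>v. v \<noteq> 0 \<longrightarrow> v \<bullet> (A *v v) > 0)"

definition is_lin_resid ::
  "'a measure \<Rightarrow> 'k set \<Rightarrow> ('k \<Rightarrow> 'a \<Rightarrow> real) \<Rightarrow> ('a \<Rightarrow> real) \<Rightarrow> ('a \<Rightarrow> real) \<Rightarrow> bool" where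
  "is_lin_resid M K C U r \<longleftrightarrow>
     (\<exists>a c. r = (\<lambda>\<omega>. U \<omega> - a - (\<Sum>k\<in>K. c k * C k \<omega>)) \<and>
        (\<forall>a' c'. (\<integral>\<omega>. (U \<omega> - a - (\<Sum>k\<in>K. c k * C k \<omega>))^2 \<partial>M)
               \<le> (\<integral>\<omega>. (U \<omega> - a' - (\<Sum>k\<in>K. c' k * C k \<omega>))^2 \<partial>M)))"

definition lin_resid ::
  "'a measure \<Rightarrow> 'k set \<Rightarrow> ('k \<Rightarrow> 'a \<Rightarrow> real) \<Rightarrow> ('a \<Rightarrow> real) \<Rightarrow> ('a \<Rightarrow> real)" where
  "lin_resid M K C U = (SOME r. is_lin_resid M K C U r)"

definition partial_corr ::
  "'a measure \<Rightarrow> 'k set \<Rightarrow> ('k \<Rightarrow> 'a \<Rightarrow> real) \<Rightarrow> ('a \<Rightarrow> real) \<Rightarrow> ('a \<Rightarrow> real) \<Rightarrow> real" where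
  "partial_corr M K C U V = rcorr M (lin_resid M K C U) (lin_resid M K C V)"

definition conv_in_prob :: "'a measure \<Rightarrow> (nat \<Rightarrow> 'a \<Rightarrow> 'b::metric_space) \<Rightarrow> 'b \<Rightarrow> bool" where
  "conv_in_prob M Xs c \<longleftrightarrow> (\<forall>n. Xs n \<in> borel_measurable M) \<and>
     (\<forall>e>0. (\<lambda>n. measure M {\<omega> \<in> space M. dist (Xs n \<omega>) c > e}) \<longlonglongrightarrow> 0)"

definition outer_prod :: "real^'k \<Rightarrow> real^'k^'k" where
  "outer_prod x = (\<chi> i j. x $ i * x $ j)"

text \<open>OLS coefficients of the regression of y_i on the regressor vectors R_i, i < N
  (set to 0 if the Gram matrix is singular).\<close>
definition ols_coef :: "(nat \<Rightarrow> real^'k) \<Rightarrow> (nat \<Rightarrow> real) \<Rightarrow> nat \<Rightarrow> real^'k" where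
  "ols_coef R y N =
     (let G = (\<Sum>i<N. outer_prod (R i)); r = (\<Sum>i<N. y i *\<^sub>R R i)
      in if invertible G then matrix_inv G *v r else 0)"

text \<open>Coordinate functionals of a data point (Y,Z,X,W).\<close>
definition coord_funs :: "(real \<times> (real^'p) \<times> (real^'d) \<times> (real^'d) \<Rightarrow> real) set" where
  "coord_funs = {fst} \<union> range (\<lambda>j t. fst (snd t) $ j) \<union> range (\<lambda>j t. fst (snd (snd t)) $ j)
      \<union> range (\<lambda>j t. snd (snd (snd t)) $ j)"

text \<open>Independence of two random variables (possibly with different codomains),
  stated on events of the Borel sigma-algebras.\<close>
definition indep_rv :: "'a measure \<Rightarrow> ('a \<Rightarrow> 'b::topological_space) \<Rightarrow> ('a \<Rightarrow> 'c::topological_space) \<Rightarrow> bool" where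
  "indep_rv M U V \<longleftrightarrow> U \<in> borel_measurable M \<and> V \<in> borel_measurable M \<and>
     (\<forall>A\<in>sets borel. \<forall>B\<in>sets borel.
        measure M (U -` A \<inter> V -` B \<inter> space M) =
        measure M (U -` A \<inter> space M) * measure M (V -` B \<inter> space M))"

end

theory Submission
  imports Defs
begin

(* Write V = (Z, X) and U = (Z, W) = V + (0, E).  By the moment hypotheses and Cramer's rule, the
   OLS coefficients converge in probability to the solution of the population normal equations,
   whose slope part gamma satisfies Cov(U) gamma = Cov(U, Y).  Since E is independent of (Z, X, Y),
   Cov(U) = Cov(V) + D with D = diag(0, a), and Cov(U, Y) = Cov(V, Y) = Cov(V) beta by the normal
   equations of the population regression.  Hence Cov(U) (gamma - beta) = - D beta =: w, a
   nonnegative vector (No Benefit) with w_j0 = 0.  Positive pairwise partial correlations say that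
   the off-diagonal entries of Cov(V)^-1 among the X-coordinates are nonpositive, and adding a
   nonnegative diagonal matrix preserves this (Sherman-Morrison, one coordinate at a time).  So
   (gamma - beta)_j0 = sum_k (Cov(U)^-1)_(j0,k) w_k <= 0. *)

section \<open>Convergence in probability\<close>

lemma sets_dist_gt:
  fixes f :: "'a \<Rightarrow> 'b::metric_space"
  assumes "f \<in> borel_measurable M"
  shows "{\<omega> \<in> space M. dist (f \<omega>) c > e} \<in> sets M"
proof -
  have "(\<lambda>\<omega>. dist (f \<omega>) c) \<in> borel_measurable M"
    using borel_measurable_continuous_on[OF _ assms, of "\<lambda>x. dist x c"]
    by (simp add: continuous_on_dist)
  then show ?thesis by measurable
qed

lemma conv_in_prob_measurable:
  "conv_in_prob M X c \<Longrightarrow> X n \<in> borel_measurable M"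
  by (simp add: conv_in_prob_def)

lemma conv_in_prob_dist_sum_bound:
  fixes X :: "nat \<Rightarrow> 'a \<Rightarrow> 'b::metric_space" and Y :: "'i \<Rightarrow> nat \<Rightarrow> 'a \<Rightarrow> 'c::metric_space"
  assumes "prob_space M" and I: "finite I"
    and X: "\<And>n. X n \<in> borel_measurable M"
    and Y: "\<And>i. i \<in> I \<Longrightarrow> conv_in_prob M (Y i) (c i)"
    and bound: "\<And>n \<omega>. \<omega> \<in> space M \<Longrightarrow> dist (X n \<omega>) x \<le> (\<Sum>i\<in>I. dist (Y i n \<omega>) (c i))"
  shows "conv_in_prob M X x"
  unfolding conv_in_prob_def
proof (intro conjI allI impI)
  interpret prob_space M by fact
  show "X n \<in> borel_measurable M" for n by fact
  fix e :: real assume "e > 0"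
  define d where "d = e / (real (card I) + 1)"
  have "d > 0"
    using \<open>e > 0\<close> by (simp add: d_def)
  have card_d: "real (card I) * d < e"
    using \<open>e > 0\<close> unfolding d_def by (simp add: field_simps)
  let ?A = "\<lambda>n i. {\<omega> \<in> space M. dist (Y i n \<omega>) (c i) > d}"
  have subset: "{\<omega> \<in> space M. dist (X n \<omega>) x > e} \<subseteq> (\<Union>i\<in>I. ?A n i)" for n
  proof
    fix \<omega> assume \<omega>: "\<omega> \<in> {\<omega> \<in> space M. dist (X n \<omega>) x > e}"
    show "\<omega> \<in> (\<Union>i\<in>I. ?A n i)"
    proof (rule ccontr)
      assume "\<omega> \<notin> (\<Union>i\<in>I. ?A n i)"
      then have "\<forall>i\<in>I. dist (Y i n \<omega>) (c i) \<le> d" using \<omega> by auto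
      then have "(\<Sum>i\<in>I. dist (Y i n \<omega>) (c i)) \<le> (\<Sum>i\<in>I. d)" by (intro sum_mono) auto
      then have "(\<Sum>i\<in>I. dist (Y i n \<omega>) (c i)) < e" using card_d by simp
      then show False using bound[of \<omega> n] \<omega> by auto
    qed
  qed
  have le: "measure M {\<omega> \<in> space M. dist (X n \<omega>) x > e} \<le> (\<Sum>i\<in>I. measure M (?A n i))" for n
  proof -
    have A_sets: "?A n ` I \<subseteq> sets M"
      using sets_dist_gt[OF conv_in_prob_measurable[OF Y]] by blast
    then have "(\<Union>i\<in>I. ?A n i) \<in> sets M"
      using I by blast
    then have "measure M {\<omega> \<in> space M. dist (X n \<omega>) x > e} \<le> measure M (\<Union>i\<in>I. ?A n i)"
      by (rule finite_measure_mono[OF subset])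
    also have "\<dots> \<le> (\<Sum>i\<in>I. measure M (?A n i))"
      by (rule finite_measure_subadditive_finite[OF I A_sets])
    finally show ?thesis .
  qed
  have "(\<lambda>n. \<Sum>i\<in>I. measure M (?A n i)) \<longlonglongrightarrow> (\<Sum>i\<in>I. 0)"
    using Y \<open>d > 0\<close> unfolding conv_in_prob_def by (intro tendsto_sum) auto
  then have lim: "(\<lambda>n. \<Sum>i\<in>I. measure M (?A n i)) \<longlonglongrightarrow> 0"
    by simp
  show "(\<lambda>n. measure M {\<omega> \<in> space M. dist (X n \<omega>) x > e}) \<longlonglongrightarrow> 0"
    by (rule Lim_null_comparison[OF always_eventually lim]) (simp add: le)
qed

lemma conv_in_prob_dist:
  assumes "conv_in_prob M X c"
  shows "conv_in_prob M (\<lambda>n \<omega>. dist (X n \<omega>) c) 0"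
  unfolding conv_in_prob_def
proof (intro conjI allI impI)
  show "(\<lambda>\<omega>. dist (X n \<omega>) c) \<in> borel_measurable M" for n
    using borel_measurable_continuous_on[OF _ conv_in_prob_measurable[OF assms], of "\<lambda>x. dist x c"]
    by (simp add: continuous_on_dist)
  show "(\<lambda>n. measure M {\<omega> \<in> space M. dist (dist (X n \<omega>) c) 0 > e}) \<longlonglongrightarrow> 0" if "e > 0" for e
    using assms that unfolding conv_in_prob_def by (simp add: dist_real_def)
qed

lemma conv_in_prob_vec:
  fixes X :: "nat \<Rightarrow> 'a \<Rightarrow> 'b::metric_space ^'n"
  assumes "prob_space M" and "\<And>n. X n \<in> borel_measurable M"
    and "\<And>i. conv_in_prob M (\<lambda>n \<omega>. X n \<omega> $ i) (c $ i)"
  shows "conv_in_prob M X c"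
proof (rule conv_in_prob_dist_sum_bound[OF assms(1) _ assms(2), where I=UNIV])
  show "dist (X n \<omega>) c \<le> (\<Sum>i\<in>UNIV. dist (X n \<omega> $ i) (c $ i))" for n \<omega>
    unfolding dist_vec_def by (rule L2_set_le_sum) simp
qed (simp_all add: assms(3))

lemma conv_in_prob_Pair:
  fixes X :: "nat \<Rightarrow> 'a \<Rightarrow> 'b::{metric_space,second_countable_topology}"
    and Y :: "nat \<Rightarrow> 'a \<Rightarrow> 'c::{metric_space,second_countable_topology}"
  assumes "prob_space M" and X: "conv_in_prob M X a" and Y: "conv_in_prob M Y b"
  shows "conv_in_prob M (\<lambda>n \<omega>. (X n \<omega>, Y n \<omega>)) (a, b)"
proof (rule conv_in_prob_dist_sum_bound[OF \<open>prob_space M\<close>, where I=UNIV and c="\<lambda>_. 0"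
    and Y="\<lambda>q. if q then (\<lambda>n \<omega>. dist (X n \<omega>) a) else (\<lambda>n \<omega>. dist (Y n \<omega>) b)"])
  show "(\<lambda>\<omega>. (X n \<omega>, Y n \<omega>)) \<in> borel_measurable M" for n
    using X Y by (intro borel_measurable_Pair conv_in_prob_measurable)
  show "conv_in_prob M (if q then (\<lambda>n \<omega>. dist (X n \<omega>) a) else (\<lambda>n \<omega>. dist (Y n \<omega>) b)) 0" for q
    using conv_in_prob_dist[OF X] conv_in_prob_dist[OF Y] by simp
  show "dist (X n \<omega>, Y n \<omega>) (a, b)
      \<le> (\<Sum>q\<in>UNIV. dist ((if q then (\<lambda>n \<omega>. dist (X n \<omega>) a) else (\<lambda>n \<omega>. dist (Y n \<omega>) b)) n \<omega>) 0)" for n \<omega>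
    using sqrt_sum_squares_le_sum[OF zero_le_dist zero_le_dist, of "X n \<omega>" a "Y n \<omega>" b]
    by (simp add: UNIV_bool dist_Pair_Pair add.commute)
qed simp

lemma conv_in_prob_isCont:
  fixes X :: "nat \<Rightarrow> 'a \<Rightarrow> 'b::metric_space" and g :: "'b \<Rightarrow> 'c::metric_space"
  assumes "prob_space M" and X: "conv_in_prob M X c" and "isCont g c"
    and g: "g \<in> borel_measurable borel"
  shows "conv_in_prob M (\<lambda>n \<omega>. g (X n \<omega>)) (g c)"
  unfolding conv_in_prob_def
proof (intro conjI allI impI)
  interpret prob_space M by fact
  show "(\<lambda>\<omega>. g (X n \<omega>)) \<in> borel_measurable M" for n
    using measurable_comp[OF conv_in_prob_measurable[OF X] g] by (simp add: comp_def)
  fix e :: real assume "e > 0"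
  then obtain d where "d > 0" and d: "\<And>y. dist y c < d \<Longrightarrow> dist (g y) (g c) < e"
    using \<open>isCont g c\<close> unfolding continuous_at_eps_delta by blast
  have le: "measure M {\<omega> \<in> space M. dist (g (X n \<omega>)) (g c) > e}
      \<le> measure M {\<omega> \<in> space M. dist (X n \<omega>) c > d/2}" for n
  proof (rule finite_measure_mono)
    show "{\<omega> \<in> space M. dist (g (X n \<omega>)) (g c) > e} \<subseteq> {\<omega> \<in> space M. dist (X n \<omega>) c > d/2}"
    proof (intro subsetI CollectI conjI; elim CollectE conjE)
      fix \<omega> assume "\<omega> \<in> space M" "e < dist (g (X n \<omega>)) (g c)"
      then have "\<not> dist (X n \<omega>) c < d"
        using d by force
      with \<open>\<omega> \<in> space M\<close> \<open>d > 0\<close> show "\<omega> \<in> space M" and "d/2 < dist (X n \<omega>) c"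
        by simp_all
    qed
  qed (rule sets_dist_gt[OF conv_in_prob_measurable[OF X]])
  have "d/2 > 0"
    using \<open>d > 0\<close> by simp
  then have lim: "(\<lambda>n. measure M {\<omega> \<in> space M. dist (X n \<omega>) c > d/2}) \<longlonglongrightarrow> 0"
    using X unfolding conv_in_prob_def by blast
  show "(\<lambda>n. measure M {\<omega> \<in> space M. dist (g (X n \<omega>)) (g c) > e}) \<longlonglongrightarrow> 0"
    by (rule Lim_null_comparison[OF always_eventually lim]) (use le in simp)
qed

lemma conv_in_prob_eventually_const:
  assumes "\<And>n. X n \<in> borel_measurable M"
    and "\<And>n \<omega>. n \<ge> N \<Longrightarrow> \<omega> \<in> space M \<Longrightarrow> X n \<omega> = c"
  shows "conv_in_prob M X c"
  unfolding conv_in_prob_def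
proof (intro conjI allI impI)
  show "X n \<in> borel_measurable M" for n by fact
  fix e :: real assume "e > 0"
  then have "{\<omega> \<in> space M. dist (X n \<omega>) c > e} = {}" if "n \<ge> N" for n
    using assms(2)[OF that] by auto
  then have "measure M {\<omega> \<in> space M. dist (X n \<omega>) c > e} = 0" if "n \<ge> N" for n
    using that by (metis measure_empty)
  then show "(\<lambda>n. measure M {\<omega> \<in> space M. dist (X n \<omega>) c > e}) \<longlonglongrightarrow> 0"
    by (intro tendsto_eventually) (auto simp: eventually_sequentially)
qed

lemma sample_moment_conv_in_prob:
  fixes D :: "nat \<Rightarrow> 'a \<Rightarrow> 't" and D0 :: "'a \<Rightarrow> 't"
  assumes "prob_space M"
    and mom1: "\<forall>f\<in>F. conv_in_prob M (\<lambda>N \<omega>. (\<Sum>i<N. f (D i \<omega>)) / real N) (\<integral>\<omega>. f (D0 \<omega>) \<partial>M)"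
    and mom2: "\<forall>f\<in>F. \<forall>g\<in>F. conv_in_prob M
        (\<lambda>N \<omega>. (\<Sum>i<N. f (D i \<omega>) * g (D i \<omega>)) / real N) (\<integral>\<omega>. f (D0 \<omega>) * g (D0 \<omega>) \<partial>M)"
    and f: "f \<in> insert (\<lambda>_. 1) F" and g: "g \<in> insert (\<lambda>_. 1) F"
  shows "conv_in_prob M (\<lambda>N \<omega>. (\<Sum>i<N. f (D i \<omega>) * g (D i \<omega>)) / real N) (\<integral>\<omega>. f (D0 \<omega>) * g (D0 \<omega>) \<partial>M)"
proof -
  interpret prob_space M by fact
  have "conv_in_prob M (\<lambda>N \<omega>. real N / real N) 1"
    by (rule conv_in_prob_eventually_const[where N=1]) simp_all
  then show ?thesis
    using f g mom1 mom2 by (auto simp: prob_space mult.commute[of _ 1])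
qed

section \<open>Square-integrable random variables and covariance\<close>

definition sq_integrable :: "'a measure \<Rightarrow> ('a \<Rightarrow> real) \<Rightarrow> bool" where
  "sq_integrable M f \<longleftrightarrow> f \<in> borel_measurable M \<and> integrable M (\<lambda>x. (f x)^2)"

lemma sq_integrable_cong:
  assumes "\<And>\<omega>. \<omega> \<in> space M \<Longrightarrow> f \<omega> = g \<omega>" and "g \<in> borel_measurable M" and "sq_integrable M f"
  shows "sq_integrable M g"
  using assms Bochner_Integration.integrable_cong[of M M "\<lambda>\<omega>. (f \<omega>)^2" "\<lambda>\<omega>. (g \<omega>)^2"]
  unfolding sq_integrable_def by simp

lemma borel_measurable_vec_nth:
  fixes X :: "'a \<Rightarrow> 'b::real_normed_vector^'n"
  assumes "X \<in> borel_measurable M"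
  shows "(\<lambda>\<omega>. X \<omega> $ i) \<in> borel_measurable M"
  using borel_measurable_continuous_on[OF _ assms, of "\<lambda>v. v $ i"]
  by (simp add: continuous_on_component)

lemma sq_integrable_vec_nth:
  fixes X :: "'a \<Rightarrow> real^'n"
  assumes "X \<in> borel_measurable M" and "integrable M (\<lambda>\<omega>. (X \<omega> $ i)^2)"
  shows "sq_integrable M (\<lambda>\<omega>. X \<omega> $ i)"
  using assms borel_measurable_vec_nth unfolding sq_integrable_def by blast

lemma integrable_mult_sq_integrable:
  assumes "sq_integrable M f" "sq_integrable M g"
  shows "integrable M (\<lambda>x. f x * g x)"
proof (rule Bochner_Integration.integrable_bound)
  show "integrable M (\<lambda>x. (f x)^2 + (g x)^2)" and "(\<lambda>x. f x * g x) \<in> borel_measurable M"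
    using assms by (simp_all add: sq_integrable_def borel_measurable_times)
  have "2 * \<bar>f x * g x\<bar> \<le> (f x)^2 + (g x)^2" for x
    using sum_squares_bound[of "\<bar>f x\<bar>" "\<bar>g x\<bar>"] by (simp add: abs_mult)
  then have "norm (f x * g x) \<le> norm ((f x)^2 + (g x)^2)" for x
    by (smt (verit) real_norm_def abs_ge_zero zero_le_power2)
  then show "AE x in M. norm (f x * g x) \<le> norm ((f x)^2 + (g x)^2)"
    by simp
qed

context prob_space
begin

lemma sq_integrable_imp_integrable: "sq_integrable M f \<Longrightarrow> integrable M f"
  unfolding sq_integrable_def by (blast intro: square_integrable_imp_integrable)

lemma sq_integrable_const [simp, intro]: "sq_integrable M (\<lambda>x. c)"
  by (simp add: sq_integrable_def)

lemma sq_integrable_add [intro]: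
  assumes "sq_integrable M f" "sq_integrable M g"
  shows "sq_integrable M (\<lambda>x. f x + g x)"
proof -
  have "(\<lambda>x. (f x + g x)^2) = (\<lambda>x. (f x)^2 + 2 * (f x * g x) + (g x)^2)"
    by (simp add: power2_sum algebra_simps)
  then show ?thesis
    using assms integrable_mult_sq_integrable[OF assms] unfolding sq_integrable_def
    by (simp add: borel_measurable_add)
qed

lemma sq_integrable_cmult [intro]: "sq_integrable M f \<Longrightarrow> sq_integrable M (\<lambda>x. c * f x)"
  unfolding sq_integrable_def by (simp add: power_mult_distrib borel_measurable_times)

lemma sq_integrable_diff [intro]:
  "sq_integrable M f \<Longrightarrow> sq_integrable M g \<Longrightarrow> sq_integrable M (\<lambda>x. f x - g x)"
  using sq_integrable_add[of f "\<lambda>x. (-1) * g x"] sq_integrable_cmult[of g "-1"] by simp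

lemma sq_integrable_sum [intro]:
  "(\<And>k. k \<in> K \<Longrightarrow> sq_integrable M (g k)) \<Longrightarrow> sq_integrable M (\<lambda>x. \<Sum>k\<in>K. g k x)"
  by (induction K rule: infinite_finite_induct) auto

lemma rcov_commute: "rcov M f g = rcov M g f"
  unfolding rcov_def by (simp add: mult.commute)

lemma rcov_cong:
  assumes "\<And>\<omega>. \<omega> \<in> space M \<Longrightarrow> f \<omega> = f' \<omega>" "\<And>\<omega>. \<omega> \<in> space M \<Longrightarrow> g \<omega> = g' \<omega>"
  shows "rcov M f g = rcov M f' g'"
  unfolding rcov_def using assms by (simp cong: Bochner_Integration.integral_cong)

lemma rcov_add_right:
  assumes "sq_integrable M f" "sq_integrable M g" "sq_integrable M h"
  shows "rcov M f (\<lambda>x. g x + h x) = rcov M f g + rcov M f h"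
  using integrable_mult_sq_integrable[OF assms(1,2)] integrable_mult_sq_integrable[OF assms(1,3)]
    sq_integrable_imp_integrable[OF assms(2)] sq_integrable_imp_integrable[OF assms(3)]
  unfolding rcov_def by (simp add: algebra_simps)

lemma rcov_add_left:
  assumes "sq_integrable M f" "sq_integrable M g" "sq_integrable M h"
  shows "rcov M (\<lambda>x. f x + g x) h = rcov M f h + rcov M g h"
  using rcov_add_right[OF assms(3,1,2)] by (simp add: rcov_commute)

lemma rcov_cmult_right: "rcov M f (\<lambda>x. c * g x) = c * rcov M f g"
  unfolding rcov_def by (simp add: algebra_simps)

lemma rcov_const_right [simp]: "rcov M f (\<lambda>x. c) = 0"
  unfolding rcov_def by (simp add: prob_space)

lemma rcov_const_left [simp]: "rcov M (\<lambda>x. c) g = 0"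
  by (simp add: rcov_commute)

lemma rcov_diff_right:
  assumes "sq_integrable M f" "sq_integrable M g" "sq_integrable M h"
  shows "rcov M f (\<lambda>x. g x - h x) = rcov M f g - rcov M f h"
  using rcov_add_right[OF assms(1,2) sq_integrable_cmult[OF assms(3), of "-1"]]
    rcov_cmult_right[of f "-1" h]
  by simp

lemma rcov_sum_right:
  assumes "sq_integrable M f" "\<And>k. k \<in> K \<Longrightarrow> sq_integrable M (g k)"
  shows "rcov M f (\<lambda>x. \<Sum>k\<in>K. g k x) = (\<Sum>k\<in>K. rcov M f (g k))"
  using assms(2)
proof (induction K rule: infinite_finite_induct)
  case (insert k K)
  then show ?case
    using rcov_add_right[OF assms(1), of "g k" "\<lambda>x. \<Sum>k\<in>K. g k x"] by auto
qed simp_all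

lemma rcov_lincomb_right:
  assumes "sq_integrable M f" "\<And>k. k \<in> K \<Longrightarrow> sq_integrable M (g k)"
  shows "rcov M f (\<lambda>x. \<Sum>k\<in>K. c k * g k x) = (\<Sum>k\<in>K. c k * rcov M f (g k))"
  using assms by (simp add: sq_integrable_cmult rcov_sum_right rcov_cmult_right)

lemma rcov_affine_right:
  assumes "sq_integrable M f" "\<And>k. k \<in> K \<Longrightarrow> sq_integrable M (g k)"
  shows "rcov M f (\<lambda>x. c0 + (\<Sum>k\<in>K. c k * g k x)) = (\<Sum>k\<in>K. c k * rcov M f (g k))"
  using assms
  by (simp add: rcov_add_right sq_integrable_sum sq_integrable_cmult rcov_lincomb_right)

lemma rcov_self_nonneg:
  assumes "sq_integrable M f"
  shows "rcov M f f \<ge> 0"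
proof -
  let ?m = "\<integral>x. f x \<partial>M"
  have "(\<lambda>x. (f x - ?m)^2) = (\<lambda>x. (f x)^2 - 2 * ?m * f x + ?m^2)"
    by (simp add: power2_diff algebra_simps)
  then have "(\<integral>x. (f x - ?m)^2 \<partial>M) = (\<integral>x. (f x)^2 \<partial>M) - 2 * ?m * ?m + ?m^2"
    using assms sq_integrable_imp_integrable[OF assms] unfolding sq_integrable_def
    by (simp add: prob_space)
  also have "\<dots> = rcov M f f"
    unfolding rcov_def by (simp add: power2_eq_square)
  finally show ?thesis
    by (metis integral_nonneg_AE AE_I2 zero_le_power2)
qed

text \<open>The library's \<open>indep_var\<close> requires both variables to have the same codomain, so
  compositions are formed with \<open>indep_rv\<close> before converting.\<close>
lemma indep_rv_compose:
  fixes f :: "'b::topological_space \<Rightarrow> 'd::topological_space"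
    and g :: "'c::topological_space \<Rightarrow> 'e::topological_space"
  assumes "indep_rv M U V" and "f \<in> borel_measurable borel" and "g \<in> borel_measurable borel"
  shows "indep_rv M (\<lambda>\<omega>. f (U \<omega>)) (\<lambda>\<omega>. g (V \<omega>))"
  unfolding indep_rv_def
proof (intro conjI ballI)
  show "(\<lambda>\<omega>. f (U \<omega>)) \<in> borel_measurable M" "(\<lambda>\<omega>. g (V \<omega>)) \<in> borel_measurable M"
    using assms measurable_compose unfolding indep_rv_def by blast+
  fix A B assume "A \<in> sets (borel :: 'd measure)" "B \<in> sets (borel :: 'e measure)"
  then have "f -` A \<in> sets borel" "g -` B \<in> sets borel"
    using assms(2,3) measurable_sets_borel by blast+
  moreover have "(\<lambda>\<omega>. f (U \<omega>)) -` A = U -` (f -` A)" "(\<lambda>\<omega>. g (V \<omega>)) -` B = V -` (g -` B)"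
    by auto
  ultimately show "prob ((\<lambda>\<omega>. f (U \<omega>)) -` A \<inter> (\<lambda>\<omega>. g (V \<omega>)) -` B \<inter> space M)
      = prob ((\<lambda>\<omega>. f (U \<omega>)) -` A \<inter> space M) * prob ((\<lambda>\<omega>. g (V \<omega>)) -` B \<inter> space M)"
    using assms(1) unfolding indep_rv_def by (simp only:)
qed

lemma indep_rv_imp_indep_var:
  fixes U V :: "'a \<Rightarrow> 'b::topological_space"
  assumes "indep_rv M U V"
  shows "indep_var borel U borel V"
proof -
  have U: "U \<in> borel_measurable M" and V: "V \<in> borel_measurable M"
    and prod: "\<And>A B. A \<in> sets borel \<Longrightarrow> B \<in> sets borel \<Longrightarrow>
        prob (U -` A \<inter> V -` B \<inter> space M) = prob (U -` A \<inter> space M) * prob (V -` B \<inter> space M)"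
    using assms unfolding indep_rv_def by auto
  have Int_stable: "Int_stable {X -` A \<inter> space M |A. A \<in> sets S}" for S and X :: "'a \<Rightarrow> 'z"
  proof (safe intro!: Int_stableI)
    fix A B assume "A \<in> sets S" "B \<in> sets S"
    then show "\<exists>C. (X -` A \<inter> space M) \<inter> (X -` B \<inter> space M) = (X -` C \<inter> space M) \<and> C \<in> sets S"
      by (intro exI[of _ "A \<inter> B"]) auto
  qed
  show ?thesis
    unfolding indep_var_eq
  proof (intro conjI indep_set_sigma_sets Int_stable U V)
    show "indep_set {U -` A \<inter> space M |A. A \<in> sets borel} {V -` A \<inter> space M |A. A \<in> sets borel}"
    proof (safe intro!: indep_setI)
      fix A B assume "A \<in> sets (borel :: 'b measure)" "B \<in> sets (borel :: 'b measure)"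
      then show "prob ((U -` A \<inter> space M) \<inter> (V -` B \<inter> space M)) = prob (U -` A \<inter> space M) * prob (V -` B \<inter> space M)"
        using prod by (simp add: Int_left_commute Int_assoc)
    qed (use U V in \<open>auto intro: measurable_sets\<close>)
  qed
qed

lemma rcov_indep_eq_0:
  fixes f :: "'b::topological_space \<Rightarrow> real" and g :: "'c::topological_space \<Rightarrow> real"
  assumes "indep_rv M U V" and f: "f \<in> borel_measurable borel" and g: "g \<in> borel_measurable borel"
    and "sq_integrable M (\<lambda>\<omega>. f (U \<omega>))" "sq_integrable M (\<lambda>\<omega>. g (V \<omega>))"
  shows "rcov M (\<lambda>\<omega>. f (U \<omega>)) (\<lambda>\<omega>. g (V \<omega>)) = 0"
proof -
  have "indep_var borel (\<lambda>\<omega>. f (U \<omega>)) borel (\<lambda>\<omega>. g (V \<omega>))"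
    by (rule indep_rv_imp_indep_var[OF indep_rv_compose[OF assms(1) f g]])
  then show ?thesis
    unfolding rcov_def using assms(4,5)
    by (simp add: indep_var_lebesgue_integral sq_integrable_imp_integrable)
qed

end

section \<open>Positive definite matrices\<close>

lemma pos_def_mat_inj:
  fixes B :: "real^'n^'n"
  assumes "pos_def_mat B"
  shows "inj ((*v) B)"
proof (rule linear_injective_0[THEN iffD2])
  show "\<forall>x. B *v x = 0 \<longrightarrow> x = 0"
    using assms unfolding pos_def_mat_def by (metis inner_zero_right less_irrefl)
qed simp

lemma pos_def_mat_surj:
  fixes B :: "real^'n^'n"
  assumes "pos_def_mat B"
  shows "surj ((*v) B)"
  by (rule linear_injective_imp_surjective) (simp_all add: pos_def_mat_inj[OF assms])

lemma pos_def_mat_solve_on: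
  fixes S :: "real^'n^'n"
  assumes pd: "pos_def_mat S"
  shows "\<exists>c. (\<forall>l\<in>K. (S *v c) $ l = s $ l) \<and> (\<forall>l. l \<notin> K \<longrightarrow> c $ l = 0)"
proof -
  define L where "L = (\<lambda>c. (\<chi> l. if l \<in> K then (S *v c) $ l else c $ l) :: real^'n)"
  have "linear L"
    unfolding L_def
    by (rule linearI) (auto simp: vec_eq_iff matrix_vector_right_distrib matrix_vector_mult_scaleR)
  moreover have "inj L"
  proof (rule linear_injective_0[OF \<open>linear L\<close>, THEN iffD2], intro allI impI)
    fix c assume "L c = 0"
    then have "(if l \<in> K then (S *v c) $ l else c $ l) = 0" for l
      unfolding L_def by (simp add: vec_eq_iff)
    then have "c $ l * (S *v c) $ l = 0" for l
      by (metis mult_zero_left mult_zero_right)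
    then have "c \<bullet> (S *v c) = 0"
      unfolding inner_vec_def by (simp add: sum.neutral)
    then show "c = 0"
      using pd unfolding pos_def_mat_def by (metis less_irrefl)
  qed
  ultimately have "surj L"
    by (simp add: linear_injective_imp_surjective)
  then obtain c where "L c = (\<chi> l. if l \<in> K then s $ l else 0)"
    by (metis surjD)
  then show ?thesis
    unfolding L_def by (intro exI[of _ c]) (auto simp: vec_eq_iff split: if_splits)
qed

lemma pos_def_mat_solution_axis_pos:
  assumes "pos_def_mat B" and "B *v x = axis k 1"
  shows "x $ k > 0"
proof -
  have "x \<noteq> 0"
    using assms(2) by (metis axis_eq_0_iff matrix_vector_mult_0_right zero_neq_one)
  then have "x \<bullet> (B *v x) > 0"
    using assms(1) unfolding pos_def_mat_def by blast
  then show ?thesis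
    using assms(2) by (simp add: inner_axis)
qed

section \<open>Population least squares\<close>

lemma linear_coeff_eq_0_if_quadratic_nonneg:
  fixes B C :: real
  assumes nonneg: "\<And>t. 0 \<le> t^2 * C - 2 * t * B" and "C \<ge> 0"
  shows "B = 0"
proof (rule ccontr)
  assume "B \<noteq> 0"
  define t where "t = B / (C + 1)"
  have t: "t * (C + 1) = B"
    using \<open>C \<ge> 0\<close> by (simp add: t_def)
  have "(C + 1)^2 * (t^2 * C - 2 * t * B) = (t * (C + 1))^2 * C - 2 * (t * (C + 1)) * B * (C + 1)"
    by (simp add: algebra_simps power2_eq_square)
  also have "\<dots> = - (B^2 * (C + 2))"
    unfolding t by (simp add: algebra_simps power2_eq_square)
  finally have "(C + 1)^2 * (t^2 * C - 2 * t * B) = - (B^2 * (C + 2))" .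
  moreover have "0 \<le> (C + 1)^2 * (t^2 * C - 2 * t * B)"
    using nonneg by simp
  moreover have "B^2 * (C + 2) > 0"
    using \<open>B \<noteq> 0\<close> \<open>C \<ge> 0\<close> by simp
  ultimately show False
    by linarith
qed

context prob_space
begin

lemma least_squares_orthogonal:
  assumes r: "sq_integrable M r" and w: "sq_integrable M w"
    and min: "\<And>t. (\<integral>\<omega>. (r \<omega>)^2 \<partial>M) \<le> (\<integral>\<omega>. (r \<omega> - t * w \<omega>)^2 \<partial>M)"
  shows "(\<integral>\<omega>. r \<omega> * w \<omega> \<partial>M) = 0"
proof (rule linear_coeff_eq_0_if_quadratic_nonneg)
  fix t
  have "(\<lambda>\<omega>. (r \<omega> - t * w \<omega>)^2) = (\<lambda>\<omega>. (r \<omega>)^2 - (2 * t) * (r \<omega> * w \<omega>) + t^2 * (w \<omega>)^2)"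
    by (simp add: power2_diff algebra_simps)
  then have "(\<integral>\<omega>. (r \<omega> - t * w \<omega>)^2 \<partial>M)
      = (\<integral>\<omega>. (r \<omega>)^2 \<partial>M) - 2 * t * (\<integral>\<omega>. r \<omega> * w \<omega> \<partial>M) + t^2 * (\<integral>\<omega>. (w \<omega>)^2 \<partial>M)"
    using r w integrable_mult_sq_integrable[OF r w] unfolding sq_integrable_def by simp
  then show "0 \<le> t^2 * (\<integral>\<omega>. (w \<omega>)^2 \<partial>M) - 2 * t * (\<integral>\<omega>. r \<omega> * w \<omega> \<partial>M)"
    using min[of t] by simp
qed simp

lemma is_lin_resid_normal_eqs:
  assumes r: "is_lin_resid M K C U r" and U: "sq_integrable M U"
    and C: "\<And>l. l \<in> K \<Longrightarrow> sq_integrable M (C l)" and "finite K"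
  shows "sq_integrable M r" and "(\<integral>\<omega>. r \<omega> \<partial>M) = 0" and "\<And>l. l \<in> K \<Longrightarrow> rcov M r (C l) = 0"
proof -
  obtain a c where r_eq: "r = (\<lambda>\<omega>. U \<omega> - a - (\<Sum>l\<in>K. c l * C l \<omega>))"
    and min: "\<And>a' c'. (\<integral>\<omega>. (r \<omega>)^2 \<partial>M) \<le> (\<integral>\<omega>. (U \<omega> - a' - (\<Sum>k\<in>K. c' k * C k \<omega>))^2 \<partial>M)"
    using r unfolding is_lin_resid_def by auto
  show sq_r: "sq_integrable M r"
    unfolding r_eq using U C by (intro sq_integrable_diff sq_integrable_sum sq_integrable_cmult) auto
  have orth: "(\<integral>\<omega>. r \<omega> * w \<omega> \<partial>M) = 0"
    if "sq_integrable M w" and "\<And>t. \<exists>a' c'. \<forall>\<omega>. r \<omega> - t * w \<omega> = U \<omega> - a' - (\<Sum>k\<in>K. c' k * C k \<omega>)" for w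
  proof (rule least_squares_orthogonal[OF sq_r \<open>sq_integrable M w\<close>])
    fix t
    from that(2)[of t] obtain a' c' where "\<And>\<omega>. r \<omega> - t * w \<omega> = U \<omega> - a' - (\<Sum>k\<in>K. c' k * C k \<omega>)"
      by blast
    then show "(\<integral>\<omega>. (r \<omega>)^2 \<partial>M) \<le> (\<integral>\<omega>. (r \<omega> - t * w \<omega>)^2 \<partial>M)"
      using min[of a' c'] by simp
  qed
  have "(\<integral>\<omega>. r \<omega> * 1 \<partial>M) = 0"
    by (rule orth) (auto simp: r_eq intro!: exI[of _ "a + _"] exI[of _ c])
  then show mean: "(\<integral>\<omega>. r \<omega> \<partial>M) = 0"
    by simp
  fix l assume "l \<in> K"
  have "(\<integral>\<omega>. r \<omega> * C l \<omega> \<partial>M) = 0"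
  proof (rule orth[OF C[OF \<open>l \<in> K\<close>]])
    fix t
    have "(\<Sum>k\<in>K. (c k + (if k = l then t else 0)) * C k \<omega>) = (\<Sum>k\<in>K. c k * C k \<omega>) + t * C l \<omega>" for \<omega>
      using \<open>l \<in> K\<close> \<open>finite K\<close> by (simp add: distrib_right sum.distrib mult_delta_left)
    then show "\<exists>a' c'. \<forall>\<omega>. r \<omega> - t * C l \<omega> = U \<omega> - a' - (\<Sum>k\<in>K. c' k * C k \<omega>)"
      by (intro exI[of _ a] exI[of _ "\<lambda>k. c k + (if k = l then t else 0)"]) (simp add: r_eq)
  qed
  then show "rcov M r (C l) = 0"
    unfolding rcov_def using mean by simp
qed

lemma is_lin_resid_if_orthogonal:
  assumes C: "\<And>l. l \<in> K \<Longrightarrow> sq_integrable M (C l)" and U: "sq_integrable M U"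
    and r: "r = (\<lambda>\<omega>. U \<omega> - a - (\<Sum>l\<in>K. c l * C l \<omega>))"
    and mean: "(\<integral>\<omega>. r \<omega> \<partial>M) = 0" and orth: "\<And>l. l \<in> K \<Longrightarrow> rcov M (C l) r = 0"
  shows "is_lin_resid M K C U r"
  unfolding is_lin_resid_def
proof (intro exI conjI allI)
  show "r = (\<lambda>\<omega>. U \<omega> - a - (\<Sum>l\<in>K. c l * C l \<omega>))"
    by fact
  fix a' c'
  define w where "w = (\<lambda>\<omega>. (a - a') + (\<Sum>l\<in>K. (c l - c' l) * C l \<omega>))"
  have sq_r: "sq_integrable M r"
    unfolding r using U C by (intro sq_integrable_diff sq_integrable_sum sq_integrable_cmult) auto
  have sq_w: "sq_integrable M w"
    unfolding w_def using C by (intro sq_integrable_add sq_integrable_sum sq_integrable_cmult) auto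
  have "rcov M r w = 0"
    unfolding w_def using sq_r C orth by (simp add: rcov_affine_right rcov_commute)
  then have "(\<integral>\<omega>. r \<omega> * w \<omega> \<partial>M) = 0"
    using mean unfolding rcov_def by simp
  moreover have "(\<lambda>\<omega>. (r \<omega> + w \<omega>)^2) = (\<lambda>\<omega>. (r \<omega>)^2 + 2 * (r \<omega> * w \<omega>) + (w \<omega>)^2)"
    by (simp add: power2_sum algebra_simps)
  ultimately have "(\<integral>\<omega>. (r \<omega> + w \<omega>)^2 \<partial>M) = (\<integral>\<omega>. (r \<omega>)^2 \<partial>M) + (\<integral>\<omega>. (w \<omega>)^2 \<partial>M)"
    using sq_r sq_w integrable_mult_sq_integrable[OF sq_r sq_w] unfolding sq_integrable_def by simp
  moreover have "(\<lambda>\<omega>. (U \<omega> - a' - (\<Sum>l\<in>K. c' l * C l \<omega>))^2) = (\<lambda>\<omega>. (r \<omega> + w \<omega>)^2)"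
    by (simp add: r w_def sum_subtractf algebra_simps)
  ultimately have "(\<integral>\<omega>. (r \<omega>)^2 \<partial>M) \<le> (\<integral>\<omega>. (U \<omega> - a' - (\<Sum>l\<in>K. c' l * C l \<omega>))^2 \<partial>M)"
    by simp
  then show "(\<integral>\<omega>. (U \<omega> - a - (\<Sum>l\<in>K. c l * C l \<omega>))^2 \<partial>M)
      \<le> (\<integral>\<omega>. (U \<omega> - a' - (\<Sum>l\<in>K. c' l * C l \<omega>))^2 \<partial>M)"
    by (simp add: r)
qed

lemma is_lin_resid_exists:
  fixes V :: "'a \<Rightarrow> real^'n"
  assumes V: "\<And>l. sq_integrable M (\<lambda>\<omega>. V \<omega> $ l)" and pd: "pos_def_mat (cov_mat M V)"
    and U: "sq_integrable M U"
  shows "\<exists>r. is_lin_resid M K (\<lambda>l \<omega>. V \<omega> $ l) U r"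
proof -
  define S where "S = cov_mat M V"
  obtain c where c_K: "\<And>l. l \<in> K \<Longrightarrow> (S *v c) $ l = rcov M (\<lambda>\<omega>. V \<omega> $ l) U"
    and c_0: "\<And>l. l \<notin> K \<Longrightarrow> c $ l = 0"
    using pos_def_mat_solve_on[of S K "\<chi> l. rcov M (\<lambda>\<omega>. V \<omega> $ l) U"] pd unfolding S_def by auto
  define a where "a = (\<integral>\<omega>. U \<omega> \<partial>M) - (\<Sum>l\<in>K. c $ l * (\<integral>\<omega>. V \<omega> $ l \<partial>M))"
  define r where "r = (\<lambda>\<omega>. U \<omega> - a - (\<Sum>l\<in>K. c $ l * V \<omega> $ l))"
  have "(\<integral>\<omega>. r \<omega> \<partial>M) = 0"
    using U V unfolding r_def a_def
    by (simp add: sq_integrable_imp_integrable Bochner_Integration.integral_sum prob_space)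
  moreover have "rcov M (\<lambda>\<omega>. V \<omega> $ l) r = 0" if "l \<in> K" for l
  proof -
    have "sq_integrable M (\<lambda>\<omega>. a + (\<Sum>m\<in>K. c $ m * V \<omega> $ m))"
      using V by (intro sq_integrable_add sq_integrable_sum sq_integrable_cmult) auto
    then have "rcov M (\<lambda>\<omega>. V \<omega> $ l) r
        = rcov M (\<lambda>\<omega>. V \<omega> $ l) U - rcov M (\<lambda>\<omega>. V \<omega> $ l) (\<lambda>\<omega>. a + (\<Sum>m\<in>K. c $ m * V \<omega> $ m))"
      using rcov_diff_right[OF V U] by (simp add: r_def diff_diff_eq)
    also have "\<dots> = rcov M (\<lambda>\<omega>. V \<omega> $ l) U - (\<Sum>m\<in>UNIV. S $ l $ m * c $ m)"
      using V by (simp add: rcov_affine_right S_def cov_mat_def c_0 mult.commute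
          sum.mono_neutral_cong_left[of UNIV K])
    also have "\<dots> = 0"
      using c_K[OF that] by (simp add: matrix_vector_mult_def)
    finally show ?thesis .
  qed
  ultimately have "is_lin_resid M K (\<lambda>l \<omega>. V \<omega> $ l) U r"
    using V U by (intro is_lin_resid_if_orthogonal[OF _ U r_def]) auto
  then show ?thesis
    by blast
qed

lemma lin_resid_is_lin_resid:
  fixes V :: "'a \<Rightarrow> real^'n"
  assumes "\<And>l. sq_integrable M (\<lambda>\<omega>. V \<omega> $ l)" and "pos_def_mat (cov_mat M V)"
    and "sq_integrable M U"
  shows "is_lin_resid M K (\<lambda>l \<omega>. V \<omega> $ l) U (lin_resid M K (\<lambda>l \<omega>. V \<omega> $ l) U)"
  unfolding lin_resid_def using is_lin_resid_exists[OF assms] by (rule someI_ex)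

lemma rcov_eq_rcov_lin_resid:
  fixes V :: "'a \<Rightarrow> real^'n"
  assumes V: "\<And>l. sq_integrable M (\<lambda>\<omega>. V \<omega> $ l)" and f: "sq_integrable M f"
    and r: "is_lin_resid M K (\<lambda>l \<omega>. V \<omega> $ l) (\<lambda>\<omega>. V \<omega> $ i) r"
    and orth: "\<And>l. l \<in> K \<Longrightarrow> rcov M f (\<lambda>\<omega>. V \<omega> $ l) = 0"
  shows "rcov M f (\<lambda>\<omega>. V \<omega> $ i) = rcov M f r"
proof -
  obtain a c where r_eq: "r = (\<lambda>\<omega>. V \<omega> $ i - a - (\<Sum>l\<in>K. c l * V \<omega> $ l))"
    using r unfolding is_lin_resid_def by auto
  have sq_r: "sq_integrable M r"
    unfolding r_eq using V by (intro sq_integrable_diff sq_integrable_sum sq_integrable_cmult) auto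
  have "rcov M f (\<lambda>\<omega>. V \<omega> $ i) = rcov M f (\<lambda>\<omega>. r \<omega> + (a + (\<Sum>l\<in>K. c l * V \<omega> $ l)))"
    by (simp add: r_eq)
  also have "\<dots> = rcov M f r + rcov M f (\<lambda>\<omega>. a + (\<Sum>l\<in>K. c l * V \<omega> $ l))"
    using f sq_r V by (intro rcov_add_right sq_integrable_add sq_integrable_sum sq_integrable_cmult) auto
  also have "rcov M f (\<lambda>\<omega>. a + (\<Sum>l\<in>K. c l * V \<omega> $ l)) = 0"
    using f V orth by (simp add: rcov_affine_right)
  finally show ?thesis
    by simp
qed

end

section \<open>Matrices whose inverse has nonpositive off-diagonal entries\<close>

text \<open>Phrased through the solutions of \<open>B x = e\<^sub>k\<close>, so that no inverse has to exist a priori;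
  for invertible \<open>B\<close> it says that the off-diagonal entries of \<open>B\<^sup>-\<^sup>1\<close> in \<open>J \<times> J\<close> are nonpositive.\<close>
definition inverse_offdiag_nonpos :: "'n set \<Rightarrow> real^'n^'n \<Rightarrow> bool" where
  "inverse_offdiag_nonpos J B \<longleftrightarrow>
     (\<forall>k\<in>J. \<forall>x. B *v x = axis k 1 \<longrightarrow> (\<forall>i\<in>J. i \<noteq> k \<longrightarrow> x $ i \<le> 0))"

context prob_space
begin

text \<open>\<open>T = x \<bullet> V\<close> is uncorrelated with every \<open>V\<^sub>l\<close>, \<open>l \<noteq> k\<close>, hence with the residual \<open>r\<^sub>i\<close>;
  expanding \<open>Cov(r\<^sub>i, T)\<close> coordinatewise gives the identity.\<close>
lemma inverse_cov_mat_lin_resid_balance: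
  fixes V :: "'a \<Rightarrow> real^'n"
  assumes V: "\<And>l. sq_integrable M (\<lambda>\<omega>. V \<omega> $ l)" and pd: "pos_def_mat (cov_mat M V)"
    and x: "cov_mat M V *v x = axis k 1" and "i \<noteq> k"
  defines "r \<equiv> \<lambda>j. lin_resid M (UNIV - {i, k}) (\<lambda>l \<omega>. V \<omega> $ l) (\<lambda>\<omega>. V \<omega> $ j)"
  shows "x $ i * rcov M (r i) (r i) + x $ k * rcov M (r i) (r k) = 0"
proof -
  define K where "K = UNIV - {i, k}"
  have r: "is_lin_resid M K (\<lambda>l \<omega>. V \<omega> $ l) (\<lambda>\<omega>. V \<omega> $ j) (r j)" for j
    unfolding r_def K_def by (rule lin_resid_is_lin_resid[OF V pd V])
  have sq_r: "sq_integrable M (r j)" and r_orth: "\<And>l. l \<in> K \<Longrightarrow> rcov M (r j) (\<lambda>\<omega>. V \<omega> $ l) = 0" for j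
    using is_lin_resid_normal_eqs[OF r V V] by auto
  define T where "T = (\<lambda>\<omega>. \<Sum>m\<in>UNIV. x $ m * V \<omega> $ m)"
  have sq_T: "sq_integrable M T"
    unfolding T_def using V by (intro sq_integrable_sum sq_integrable_cmult) auto
  have cov_T: "rcov M T (\<lambda>\<omega>. V \<omega> $ l) = (if l = k then 1 else 0)" for l
  proof -
    have "rcov M T (\<lambda>\<omega>. V \<omega> $ l) = (\<Sum>m\<in>UNIV. x $ m * rcov M (\<lambda>\<omega>. V \<omega> $ l) (\<lambda>\<omega>. V \<omega> $ m))"
      unfolding T_def using V by (subst rcov_commute) (simp add: rcov_lincomb_right)
    also have "\<dots> = (cov_mat M V *v x) $ l"
      by (simp add: matrix_vector_mult_def cov_mat_def mult.commute)
    finally show ?thesis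
      using x by (simp add: axis_def)
  qed
  have UNIV_eq: "(UNIV :: 'n set) = insert i (insert k K)"
    unfolding K_def by auto
  have "rcov M (r i) T = (\<Sum>m\<in>UNIV. x $ m * rcov M (r i) (\<lambda>\<omega>. V \<omega> $ m))"
    unfolding T_def using sq_r V by (simp add: rcov_lincomb_right)
  also have "\<dots> = x $ i * rcov M (r i) (\<lambda>\<omega>. V \<omega> $ i) + x $ k * rcov M (r i) (\<lambda>\<omega>. V \<omega> $ k)"
    by (subst UNIV_eq) (simp add: \<open>i \<noteq> k\<close> K_def r_orth)
  also have "\<dots> = x $ i * rcov M (r i) (r i) + x $ k * rcov M (r i) (r k)"
    using rcov_eq_rcov_lin_resid[OF V sq_r r r_orth] by simp
  finally show ?thesis
    using rcov_eq_rcov_lin_resid[OF V sq_T r[of i]] cov_T \<open>i \<noteq> k\<close> by (simp add: K_def rcov_commute)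
qed

lemma partial_corr_pos_imp_inverse_offdiag_nonpos:
  fixes V :: "'a \<Rightarrow> real^'n"
  assumes V: "\<And>l. sq_integrable M (\<lambda>\<omega>. V \<omega> $ l)" and pd: "pos_def_mat (cov_mat M V)"
    and pc: "\<And>i k. i \<in> J \<Longrightarrow> k \<in> J \<Longrightarrow> i \<noteq> k \<Longrightarrow>
        partial_corr M (UNIV - {i, k}) (\<lambda>l \<omega>. V \<omega> $ l) (\<lambda>\<omega>. V \<omega> $ i) (\<lambda>\<omega>. V \<omega> $ k) > 0"
  shows "inverse_offdiag_nonpos J (cov_mat M V)"
  unfolding inverse_offdiag_nonpos_def
proof (intro ballI allI impI)
  fix k x i assume "k \<in> J" and x: "cov_mat M V *v x = axis k 1" and "i \<in> J" "i \<noteq> k"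
  define r where "r = (\<lambda>j. lin_resid M (UNIV - {i, k}) (\<lambda>l \<omega>. V \<omega> $ l) (\<lambda>\<omega>. V \<omega> $ j))"
  have sq_r: "sq_integrable M (r j)" for j
    using is_lin_resid_normal_eqs(1)[OF lin_resid_is_lin_resid[OF V pd V] V V] by (simp add: r_def)
  have "rcov M (r i) (r k) / sqrt (rcov M (r i) (r i) * rcov M (r k) (r k)) > 0"
    using pc[OF \<open>i \<in> J\<close> \<open>k \<in> J\<close> \<open>i \<noteq> k\<close>] unfolding partial_corr_def rcorr_def r_def .
  moreover have "sqrt (rcov M (r i) (r i) * rcov M (r k) (r k)) \<ge> 0"
    using rcov_self_nonneg[OF sq_r] by simp
  ultimately have "rcov M (r i) (r k) > 0" and "sqrt (rcov M (r i) (r i) * rcov M (r k) (r k)) > 0"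
    by (auto simp: zero_less_divide_iff)
  moreover have "rcov M (r i) (r i) \<ge> 0"
    using rcov_self_nonneg[OF sq_r] .
  ultimately have "rcov M (r i) (r k) > 0" and var_pos: "rcov M (r i) (r i) > 0"
    by (auto simp: le_less)
  moreover have "x $ k > 0"
    by (rule pos_def_mat_solution_axis_pos[OF pd x])
  moreover have "x $ i * rcov M (r i) (r i) + x $ k * rcov M (r i) (r k) = 0"
    unfolding r_def by (rule inverse_cov_mat_lin_resid_balance[OF V pd x \<open>i \<noteq> k\<close>])
  ultimately have "x $ i * rcov M (r i) (r i) < 0"
    by (smt (verit) mult_pos_pos)
  with var_pos show "x $ i \<le> 0"
    by (simp add: mult_less_0_iff)
qed

end

lemma pos_def_mat_add_axis:
  fixes B B' :: "real^'n^'n"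
  assumes pd: "pos_def_mat B" and "c \<ge> 0"
    and B': "\<And>x. B' *v x = B *v x + (c * x $ m) *\<^sub>R axis m 1"
  shows "pos_def_mat B'"
  unfolding pos_def_mat_def
proof (intro allI impI)
  fix v :: "real^'n" assume "v \<noteq> 0"
  then have "v \<bullet> (B *v v) > 0"
    using pd unfolding pos_def_mat_def by auto
  moreover have "v \<bullet> (B' *v v) = v \<bullet> (B *v v) + c * (v $ m)^2"
    by (simp add: B' inner_add_right inner_axis power2_eq_square)
  moreover have "c * (v $ m)^2 \<ge> 0"
    using \<open>c \<ge> 0\<close> by simp
  ultimately show "v \<bullet> (B' *v v) > 0"
    by linarith
qed

lemma sherman_morrison_axis:
  fixes B B' :: "real^'n^'n"
  assumes pd: "pos_def_mat B" and "c \<ge> 0"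
    and B': "\<And>x. B' *v x = B *v x + (c * x $ m) *\<^sub>R axis m 1"
    and x': "B' *v x' = b" and x: "B *v x = b" and y: "B *v y = axis m 1"
  shows "x' = x - (c * x $ m / (1 + c * y $ m)) *\<^sub>R y"
proof -
  have "B *v x' = b - (c * x' $ m) *\<^sub>R axis m 1"
    using B'[of x'] x' by (simp add: eq_diff_eq)
  also have "\<dots> = B *v (x - (c * x' $ m) *\<^sub>R y)"
    by (simp add: x y matrix_vector_mult_diff_distrib matrix_vector_mult_scaleR)
  finally have x'_eq: "x' = x - (c * x' $ m) *\<^sub>R y"
    using pos_def_mat_inj[OF pd] by (rule injD[rotated])
  have "y $ m > 0"
    by (rule pos_def_mat_solution_axis_pos[OF pd y])
  then have "1 + c * y $ m > 0"
    using \<open>c \<ge> 0\<close> by (simp add: add_pos_nonneg)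
  moreover have "x' $ m = x $ m - c * x' $ m * y $ m"
    using arg_cong[where f="\<lambda>v. v $ m", OF x'_eq] by simp
  ultimately have "c * x' $ m = c * x $ m / (1 + c * y $ m)"
    by (simp add: field_simps)
  with x'_eq show ?thesis
    by simp
qed

lemma inverse_offdiag_nonpos_add_axis:
  fixes B B' :: "real^'n^'n"
  assumes pd: "pos_def_mat B" and "c \<ge> 0" and np: "inverse_offdiag_nonpos J B" and "m \<in> J"
    and B': "\<And>x. B' *v x = B *v x + (c * x $ m) *\<^sub>R axis m 1"
  shows "inverse_offdiag_nonpos J B'"
  unfolding inverse_offdiag_nonpos_def
proof (intro ballI allI impI)
  fix k x' i assume "k \<in> J" and x': "B' *v x' = axis k 1" and "i \<in> J" "i \<noteq> k"
  obtain x where x: "B *v x = axis k 1"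
    using pos_def_mat_surj[OF pd] by (metis surjD)
  obtain y where y: "B *v y = axis m 1"
    using pos_def_mat_surj[OF pd] by (metis surjD)
  have pos: "1 + c * y $ m > 0"
    using pos_def_mat_solution_axis_pos[OF pd y] \<open>c \<ge> 0\<close> by (simp add: add_pos_nonneg)
  have x'_i: "x' $ l = x $ l - c * x $ m / (1 + c * y $ m) * y $ l" for l
    using sherman_morrison_axis[OF pd \<open>c \<ge> 0\<close> B' x' x y] by simp
  have x_i: "x $ i \<le> 0"
    using np \<open>k \<in> J\<close> x \<open>i \<in> J\<close> \<open>i \<noteq> k\<close> unfolding inverse_offdiag_nonpos_def by blast
  show "x' $ i \<le> 0"
  proof (cases "m = k")
    case True
    then have "y = x"
      using x y pos_def_mat_inj[OF pd] by (metis injD)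
    then have "x' $ i = x $ i / (1 + c * x $ m)"
      using x'_i[of i] pos by (simp add: field_simps)
    then show ?thesis
      using x_i pos \<open>y = x\<close> by (simp add: divide_nonpos_pos)
  next
    case False
    then have "x $ m \<le> 0"
      using np \<open>k \<in> J\<close> x \<open>m \<in> J\<close> unfolding inverse_offdiag_nonpos_def by blast
    then have coeff: "c * x $ m / (1 + c * y $ m) \<le> 0"
      using \<open>c \<ge> 0\<close> pos by (simp add: divide_nonpos_pos mult_nonneg_nonpos)
    show ?thesis
    proof (cases "i = m")
      case True
      then have "x' $ i = x $ m / (1 + c * y $ m)"
        using x'_i[of m] pos by (simp add: field_simps)
      then show ?thesis
        using \<open>x $ m \<le> 0\<close> pos by (simp add: divide_nonpos_pos)
    next
      case False
      then have "y $ i \<le> 0"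
        using np \<open>m \<in> J\<close> y \<open>i \<in> J\<close> unfolding inverse_offdiag_nonpos_def by blast
      then show ?thesis
        using x'_i[of i] x_i coeff by (smt (verit) mult_nonpos_nonpos)
    qed
  qed
qed

definition diag_mat :: "'n set \<Rightarrow> ('n \<Rightarrow> real) \<Rightarrow> real^'n^'n" where
  "diag_mat S d = (\<chi> i j. if i = j \<and> i \<in> S then d i else 0)"

lemma diag_mat_mult_vec: "diag_mat S d *v x = (\<chi> i. if i \<in> S then d i * x $ i else 0)"
proof -
  have "(\<Sum>j\<in>UNIV. (if i = j \<and> i \<in> S then d i else 0) * x $ j) = (if i \<in> S then d i * x $ i else 0)" for i
    by (simp add: if_distrib if_distribR cong: if_cong)
  then show ?thesis
    by (simp add: diag_mat_def matrix_vector_mult_def vec_eq_iff)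
qed

lemma pos_def_inverse_offdiag_nonpos_add_diag_mat:
  fixes B :: "real^'n^'n"
  assumes "pos_def_mat B" and "inverse_offdiag_nonpos J B" and "S \<subseteq> J"
    and "\<And>i. i \<in> S \<Longrightarrow> d i \<ge> 0"
  shows "pos_def_mat (B + diag_mat S d) \<and> inverse_offdiag_nonpos J (B + diag_mat S d)"
proof -
  have "finite S"
    by simp
  then show ?thesis
    using assms(3,4)
  proof (induction S rule: finite_induct)
    case empty
    have "diag_mat {} d = 0"
      by (simp add: diag_mat_def vec_eq_iff)
    then show ?case
      using assms(1,2) by simp
  next
    case (insert m S)
    have IH: "pos_def_mat (B + diag_mat S d)" "inverse_offdiag_nonpos J (B + diag_mat S d)"
      using insert by auto
    have step: "(B + diag_mat (insert m S) d) *v x = (B + diag_mat S d) *v x + (d m * x $ m) *\<^sub>R axis m 1" for x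
      using insert(2) by (auto simp: matrix_vector_mult_add_rdistrib diag_mat_mult_vec vec_eq_iff axis_def)
    show ?case
      using pos_def_mat_add_axis[OF IH(1) _ step] inverse_offdiag_nonpos_add_axis[OF IH(1) _ IH(2) _ step]
        insert by auto
  qed
qed

lemma inverse_offdiag_nonpos_solution_nonpos:
  fixes B :: "real^'n^'n"
  assumes pd: "pos_def_mat B" and np: "inverse_offdiag_nonpos J B" and "j \<in> J"
    and eq: "B *v x = w" and w_nonneg: "\<And>i. w $ i \<ge> 0" and w_0: "\<And>i. i \<notin> J - {j} \<Longrightarrow> w $ i = 0"
  shows "x $ j \<le> 0"
proof -
  have "\<forall>k. \<exists>y. B *v y = axis k 1"
    using pos_def_mat_surj[OF pd] by (metis surjD)
  then obtain y where y: "\<And>k. B *v y k = axis k 1"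
    by metis
  have "w = (\<Sum>k\<in>J - {j}. w $ k *\<^sub>R axis k 1)"
  proof (subst vec_eq_iff, intro allI)
    fix i
    show "w $ i = (\<Sum>k\<in>J - {j}. w $ k *\<^sub>R axis k (1::real)) $ i"
      using w_0[of i] by (auto simp: axis_def if_distrib cong: if_cong)
  qed
  also have "\<dots> = B *v (\<Sum>k\<in>J - {j}. w $ k *\<^sub>R y k)"
    by (simp add: linear_sum[OF matrix_vector_mul_linear] matrix_vector_mult_scaleR y)
  finally have "x = (\<Sum>k\<in>J - {j}. w $ k *\<^sub>R y k)"
    using pos_def_mat_inj[OF pd] eq by (metis injD)
  then have "x $ j = (\<Sum>k\<in>J - {j}. w $ k * y k $ j)"
    by simp
  also have "\<dots> \<le> 0"
  proof (rule sum_nonpos)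
    fix k assume "k \<in> J - {j}"
    then have "y k $ j \<le> 0"
      using np y \<open>j \<in> J\<close> unfolding inverse_offdiag_nonpos_def by auto
    then show "w $ k * y k $ j \<le> 0"
      using w_nonneg[of k] by (simp add: mult_nonneg_nonpos)
  qed
  finally show ?thesis .
qed

lemma add_diag_mat_solution_le:
  fixes S :: "real^'n^'n"
  assumes pd: "pos_def_mat S" and np: "inverse_offdiag_nonpos J S"
    and d: "\<And>i. i \<in> J \<Longrightarrow> d i \<ge> 0"
    and eq: "(S + diag_mat J d) *v \<gamma> = S *v \<beta>"
    and \<beta>: "\<And>i. i \<in> J \<Longrightarrow> \<beta> $ i \<le> 0" and "j \<in> J" and "\<beta> $ j = 0"
  shows "\<gamma> $ j \<le> \<beta> $ j"
proof -
  have "pos_def_mat (S + diag_mat J d)" and "inverse_offdiag_nonpos J (S + diag_mat J d)"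
    using pos_def_inverse_offdiag_nonpos_add_diag_mat[OF pd np subset_refl d] by auto
  moreover have "(S + diag_mat J d) *v (\<gamma> - \<beta>) = - (diag_mat J d *v \<beta>)"
    using eq by (simp add: matrix_vector_mult_diff_distrib matrix_vector_mult_add_rdistrib)
  moreover have "(- (diag_mat J d *v \<beta>)) $ i \<ge> 0" for i
    using d \<beta> by (simp add: diag_mat_mult_vec mult_nonneg_nonpos)
  moreover have "(- (diag_mat J d *v \<beta>)) $ i = 0" if "i \<notin> J - {j}" for i
    using that \<open>\<beta> $ j = 0\<close> by (auto simp: diag_mat_mult_vec)
  ultimately have "(\<gamma> - \<beta>) $ j \<le> 0"
    using inverse_offdiag_nonpos_solution_nonpos \<open>j \<in> J\<close> by blast
  then show ?thesis
    by simp
qed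

section \<open>Cramer's rule and consistency of least squares\<close>

lemma borel_measurable_vecI:
  fixes f :: "'a \<Rightarrow> 'b::euclidean_space ^'n"
  assumes "\<And>i. (\<lambda>x. f x $ i) \<in> borel_measurable M"
  shows "f \<in> borel_measurable M"
proof (subst borel_measurable_euclidean_space, intro ballI)
  fix b :: "'b^'n" assume "b \<in> Basis"
  then obtain i u where b: "b = axis i u" and "u \<in> Basis"
    by (auto simp: Basis_vec_def)
  have "(\<lambda>x. f x $ i \<bullet> u) \<in> borel_measurable M"
    using assms[of i] by (intro borel_measurable_inner) auto
  then show "(\<lambda>x. f x \<bullet> b) \<in> borel_measurable M"
    by (simp add: b inner_axis)
qed

text \<open>Unlike \<open>matrix_inv\<close>, Cramer's rule is continuous at every nonsingular matrix, and division
  by \<open>det G = 0\<close> yields \<open>0\<close>, the same convention as in \<open>ols_coef\<close>.\<close>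
definition cramer_solve :: "real^'k^'k \<Rightarrow> real^'k \<Rightarrow> real^'k" where
  "cramer_solve G r = (\<chi> k. det (\<chi> i j. if j = k then r $ i else G $ i $ j) / det G)"

lemma cramer_solve_eq_iff: "det G \<noteq> 0 \<Longrightarrow> G *v x = r \<longleftrightarrow> x = cramer_solve G r"
  unfolding cramer_solve_def by (rule cramer)

lemma cramer_solve_singular: "det G = 0 \<Longrightarrow> cramer_solve G r = 0"
  by (simp add: cramer_solve_def vec_eq_iff)

lemma cramer_solve_scaleR:
  assumes "c \<noteq> 0"
  shows "cramer_solve (c *\<^sub>R G) (c *\<^sub>R r) = cramer_solve G r"
proof (cases "invertible G")
  case True
  then have "invertible (c *\<^sub>R G)"
    using scalar_invertible[OF assms] by blast
  moreover have "(c *\<^sub>R G) *v cramer_solve G r = c *\<^sub>R r"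
    using cramer_solve_eq_iff[of G] True
    by (simp add: invertible_det_nz scaleR_matrix_vector_assoc[symmetric])
  ultimately show ?thesis
    using cramer_solve_eq_iff[of "c *\<^sub>R G" "cramer_solve G r" "c *\<^sub>R r"]
    by (simp add: invertible_det_nz)
next
  case False
  then have "\<not> invertible (c *\<^sub>R G)"
    using scalar_invertible[of "inverse c" "c *\<^sub>R G"] assms by auto
  then show ?thesis
    using False by (simp add: invertible_det_nz cramer_solve_singular)
qed

lemma continuous_on_det: "continuous_on UNIV (det :: real^'n^'n \<Rightarrow> real)"
  unfolding det_def[abs_def] by (intro continuous_intros)

lemma continuous_on_det_replace_column:
  "continuous_on UNIV (\<lambda>p::(real^'k^'k) \<times> (real^'k). det (\<chi> i j. if j = k then snd p $ i else fst p $ i $ j))"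
proof -
  have "continuous_on UNIV
      (\<lambda>p::(real^'k^'k) \<times> (real^'k). (\<chi> i j. if j = k then snd p $ i else fst p $ i $ j) :: real^'k^'k)"
  proof (intro continuous_on_vec_lambda)
    show "continuous_on UNIV (\<lambda>p::(real^'k^'k) \<times> (real^'k). if j = k then snd p $ i else fst p $ i $ j)"
      for i j by (cases "j = k"; simp; intro continuous_intros)
  qed
  then show ?thesis
    using continuous_on_compose2[OF continuous_on_det] by blast
qed

lemma continuous_on_det_fst: "continuous_on UNIV (\<lambda>p::(real^'k^'k) \<times> (real^'k). det (fst p))"
  using continuous_on_compose2[OF continuous_on_det continuous_on_fst[OF continuous_on_id]] by simp

lemma borel_measurable_cramer_solve:
  "(\<lambda>p. cramer_solve (fst p) (snd p) :: real^'k) \<in> borel_measurable borel"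
  unfolding cramer_solve_def
  by (intro borel_measurable_vecI, simp, intro borel_measurable_divide
      borel_measurable_continuous_onI continuous_on_det_replace_column continuous_on_det_fst)

lemma isCont_cramer_solve:
  assumes "det G \<noteq> 0"
  shows "isCont (\<lambda>p. cramer_solve (fst p) (snd p)) (G, r)"
  unfolding cramer_solve_def isCont_def
  using continuous_on_det_replace_column continuous_on_det_fst assms
  by (intro tendsto_vec_lambda tendsto_divide) (auto simp: continuous_on_eq_continuous_at isCont_def)

lemma ols_coef_eq_cramer_solve:
  "ols_coef R y N = cramer_solve (\<Sum>i<N. outer_prod (R i)) (\<Sum>i<N. y i *\<^sub>R R i)"
proof -
  let ?G = "\<Sum>i<N. outer_prod (R i)" and ?r = "\<Sum>i<N. y i *\<^sub>R R i"
  show ?thesis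
  proof (cases "invertible ?G")
    case True
    then have "?G ** matrix_inv ?G = mat 1"
      unfolding invertible_def matrix_inv_def by (rule someI2_ex) auto
    then have "?G *v (matrix_inv ?G *v ?r) = ?r"
      by (simp add: matrix_vector_mul_assoc)
    then show ?thesis
      using True cramer_solve_eq_iff[of ?G] by (simp add: ols_coef_def invertible_det_nz)
  next
    case False
    then show ?thesis
      by (simp add: ols_coef_def invertible_det_nz cramer_solve_singular)
  qed
qed

lemma ols_coef_conv_in_prob:
  fixes R :: "nat \<Rightarrow> 'a \<Rightarrow> real^'k" and y :: "nat \<Rightarrow> 'a \<Rightarrow> real"
  assumes "prob_space M"
    and R: "\<And>i. R i \<in> borel_measurable M" and y: "\<And>i. y i \<in> borel_measurable M"
    and gram: "\<And>a b. conv_in_prob M (\<lambda>N \<omega>. (\<Sum>i<N. R i \<omega> $ a * R i \<omega> $ b) / real N) (G $ a $ b)"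
    and cross: "\<And>a. conv_in_prob M (\<lambda>N \<omega>. (\<Sum>i<N. y i \<omega> * R i \<omega> $ a) / real N) (r $ a)"
    and "det G \<noteq> 0"
  shows "conv_in_prob M (\<lambda>N \<omega>. ols_coef (\<lambda>i. R i \<omega>) (\<lambda>i. y i \<omega>) N) (cramer_solve G r)"
proof -
  define G_N where "G_N = (\<lambda>N \<omega>. (\<chi> a b. (\<Sum>i<N. R i \<omega> $ a * R i \<omega> $ b) / real N) :: real^'k^'k)"
  define r_N where "r_N = (\<lambda>N \<omega>. (\<chi> a. (\<Sum>i<N. y i \<omega> * R i \<omega> $ a) / real N) :: real^'k)"
  have ols_eq: "ols_coef (\<lambda>i. R i \<omega>) (\<lambda>i. y i \<omega>) N = cramer_solve (G_N N \<omega>) (r_N N \<omega>)" for N \<omega>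
  proof -
    have "G_N N \<omega> = inverse (real N) *\<^sub>R (\<Sum>i<N. outer_prod (R i \<omega>))"
      and "r_N N \<omega> = inverse (real N) *\<^sub>R (\<Sum>i<N. y i \<omega> *\<^sub>R R i \<omega>)"
      by (simp_all add: G_N_def r_N_def vec_eq_iff outer_prod_def divide_inverse mult.commute)
    then show ?thesis
      by (cases "N = 0") (simp_all add: ols_coef_eq_cramer_solve cramer_solve_scaleR)
  qed
  have G_N_meas: "G_N N \<in> borel_measurable M" for N
    unfolding G_N_def using R
    by (intro borel_measurable_vecI, simp, intro borel_measurable_divide borel_measurable_sum
        borel_measurable_times borel_measurable_vec_nth borel_measurable_const)
  have r_N_meas: "r_N N \<in> borel_measurable M" for N
    unfolding r_N_def using R y
    by (intro borel_measurable_vecI, simp, intro borel_measurable_divide borel_measurable_sum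
        borel_measurable_times borel_measurable_vec_nth borel_measurable_const)
  have "conv_in_prob M G_N G"
  proof (rule conv_in_prob_vec[OF \<open>prob_space M\<close> G_N_meas])
    fix a
    show "conv_in_prob M (\<lambda>N \<omega>. G_N N \<omega> $ a) (G $ a)"
      using gram borel_measurable_vec_nth[OF G_N_meas]
      by (intro conv_in_prob_vec[OF \<open>prob_space M\<close>]) (simp_all add: G_N_def)
  qed
  moreover have "conv_in_prob M r_N r"
    using cross by (intro conv_in_prob_vec[OF \<open>prob_space M\<close> r_N_meas]) (simp add: r_N_def)
  ultimately have "conv_in_prob M (\<lambda>N \<omega>. (G_N N \<omega>, r_N N \<omega>)) (G, r)"
    by (rule conv_in_prob_Pair[OF \<open>prob_space M\<close>])
  from conv_in_prob_isCont[OF \<open>prob_space M\<close> this isCont_cramer_solve[OF \<open>det G \<noteq> 0\<close>]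
      borel_measurable_cramer_solve]
  show ?thesis
    by (simp add: ols_eq)
qed

section \<open>Regression on an intercept and a mismeasured regressor\<close>

lemma vcat_nth [simp]: "vcat x y $ Inl i = x $ i" "vcat x y $ Inr j = y $ j"
  by (simp_all add: vcat_def)

lemma sum_UNIV_sum_type:
  "(\<Sum>x\<in>(UNIV :: ('a::finite + 'b::finite) set). f x) = (\<Sum>x\<in>UNIV. f (Inl x)) + (\<Sum>x\<in>UNIV. f (Inr x))"
  using sum.Plus[of "UNIV :: 'a set" "UNIV :: 'b set" f] by (simp add: comp_def)

definition slope_coef :: "real^((1 + 'p::finite) + 'd::finite) \<Rightarrow> real^('p + 'd)" where
  "slope_coef \<theta> = (\<chi> l. \<theta> $ map_sum Inr id l)"

lemma intercept_or_slope_index: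
  fixes b :: "(1 + 'p::finite) + 'd::finite"
  shows "b = Inl (Inl 1) \<or> (\<exists>l. b = map_sum Inr id l)"
proof (cases b)
  case (Inl c)
  show ?thesis
  proof (cases c)
    case (Inl u)
    then show ?thesis
      using \<open>b = Inl c\<close> num1_eq1[of u] by simp
  next
    case (Inr p)
    then show ?thesis
      using \<open>b = Inl c\<close> by (intro disjI2 exI[of _ "Inl p"]) simp
  qed
next
  case (Inr j)
  then show ?thesis
    by (intro disjI2 exI[of _ "Inr j"]) simp
qed

lemma vec_eq_iff_intercept_slope_coef:
  fixes \<theta> \<theta>' :: "real^((1 + 'p::finite) + 'd::finite)"
  shows "\<theta> = \<theta>' \<longleftrightarrow> \<theta> $ Inl (Inl 1) = \<theta>' $ Inl (Inl 1) \<and> slope_coef \<theta> = slope_coef \<theta>'"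
proof (intro iffI; (elim conjE)?)
  assume "\<theta> $ Inl (Inl 1) = \<theta>' $ Inl (Inl 1)" and "slope_coef \<theta> = slope_coef \<theta>'"
  then have "\<theta> $ b = \<theta>' $ b" for b
    using intercept_or_slope_index[of b] by (auto simp: slope_coef_def vec_eq_iff)
  then show "\<theta> = \<theta>'"
    by (simp add: vec_eq_iff)
qed simp

definition intercept_regressor :: "real^'p \<Rightarrow> real^'d \<Rightarrow> real^((1 + 'p) + 'd)" where
  "intercept_regressor z w = vcat (vcat (vec 1) z) w"

lemma intercept_regressor_nth [simp]:
  "intercept_regressor z w $ Inl (Inl u) = 1"
  "intercept_regressor z w $ Inl (Inr p) = z $ p"
  "intercept_regressor z w $ Inr j = w $ j"
  by (simp_all add: intercept_regressor_def)

lemma intercept_regressor_map_sum_nth [simp]: "intercept_regressor z w $ map_sum Inr id l = vcat z w $ l"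
  by (cases l) simp_all

context prob_space
begin

lemma normal_eq_imp_cov_normal_eq:
  fixes R :: "'a \<Rightarrow> real^'k"
  assumes R: "\<And>a. sq_integrable M (\<lambda>\<omega>. R \<omega> $ a)" and Y: "sq_integrable M Y"
    and const: "\<And>\<omega>. R \<omega> $ k0 = 1"
    and normal_eq: "(\<chi> a b. \<integral>\<omega>. R \<omega> $ a * R \<omega> $ b \<partial>M) *v \<theta> = (\<chi> a. \<integral>\<omega>. Y \<omega> * R \<omega> $ a \<partial>M)"
  shows "cov_mat M R *v \<theta> = (\<chi> a. rcov M (\<lambda>\<omega>. R \<omega> $ a) Y)"
    and "(\<Sum>b\<in>UNIV. \<theta> $ b * (\<integral>\<omega>. R \<omega> $ b \<partial>M)) = (\<integral>\<omega>. Y \<omega> \<partial>M)"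
proof -
  define F where "F = (\<lambda>\<omega>. \<Sum>b\<in>UNIV. \<theta> $ b * R \<omega> $ b)"
  have sq_F: "sq_integrable M F"
    unfolding F_def using R by (intro sq_integrable_sum sq_integrable_cmult) auto
  have "(\<integral>\<omega>. R \<omega> $ a * (Y \<omega> - F \<omega>) \<partial>M) = 0" for a
  proof -
    have "(\<integral>\<omega>. R \<omega> $ a * F \<omega> \<partial>M) = (\<Sum>b\<in>UNIV. (\<integral>\<omega>. R \<omega> $ a * R \<omega> $ b \<partial>M) * \<theta> $ b)"
      unfolding F_def using R
      by (simp add: sum_distrib_left Bochner_Integration.integral_sum integrable_mult_sq_integrable
          mult.left_commute mult.commute)
    also have "\<dots> = (\<integral>\<omega>. Y \<omega> * R \<omega> $ a \<partial>M)"
      using arg_cong[where f="\<lambda>v. v $ a", OF normal_eq] by (simp add: matrix_vector_mult_def)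
    finally show ?thesis
      using R Y sq_F by (simp add: right_diff_distrib integrable_mult_sq_integrable mult.commute)
  qed
  then have orth: "(\<integral>\<omega>. R \<omega> $ a * Y \<omega> \<partial>M) = (\<integral>\<omega>. R \<omega> $ a * F \<omega> \<partial>M)" for a
    using R Y sq_F by (simp add: right_diff_distrib integrable_mult_sq_integrable)
  from orth[of k0] show mean: "(\<Sum>b\<in>UNIV. \<theta> $ b * (\<integral>\<omega>. R \<omega> $ b \<partial>M)) = (\<integral>\<omega>. Y \<omega> \<partial>M)"
    unfolding F_def using R by (simp add: const Bochner_Integration.integral_sum sq_integrable_imp_integrable)
  have "rcov M (\<lambda>\<omega>. R \<omega> $ a) Y = rcov M (\<lambda>\<omega>. R \<omega> $ a) F" for a
    using orth[of a] orth[of k0] unfolding rcov_def by (simp add: const)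
  also have "rcov M (\<lambda>\<omega>. R \<omega> $ a) F = (cov_mat M R *v \<theta>) $ a" for a
    unfolding F_def using R
    by (simp add: rcov_lincomb_right cov_mat_def matrix_vector_mult_def mult.commute)
  finally show "cov_mat M R *v \<theta> = (\<chi> a. rcov M (\<lambda>\<omega>. R \<omega> $ a) Y)"
    by (simp add: vec_eq_iff)
qed

lemma cov_mat_intercept_regressor_mult_vec:
  fixes Z :: "'a \<Rightarrow> real^'p" and W :: "'a \<Rightarrow> real^'d"
  shows "(cov_mat M (\<lambda>\<omega>. intercept_regressor (Z \<omega>) (W \<omega>)) *v \<theta>) $ map_sum Inr id l
       = (cov_mat M (\<lambda>\<omega>. vcat (Z \<omega>) (W \<omega>)) *v slope_coef \<theta>) $ l"
  unfolding cov_mat_def matrix_vector_mult_def slope_coef_def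
  by (simp only: vec_lambda_beta sum_UNIV_sum_type, cases l,
      simp_all only: map_sum.simps id_apply vcat_nth intercept_regressor_nth, simp_all)

lemma intercept_regressor_slope_normal_eq:
  fixes Z :: "'a \<Rightarrow> real^'p" and W :: "'a \<Rightarrow> real^'d"
  assumes R: "\<And>b. sq_integrable M (\<lambda>\<omega>. intercept_regressor (Z \<omega>) (W \<omega>) $ b)" and Y: "sq_integrable M Y"
    and normal_eq: "(\<chi> a b. \<integral>\<omega>. intercept_regressor (Z \<omega>) (W \<omega>) $ a * intercept_regressor (Z \<omega>) (W \<omega>) $ b \<partial>M) *v \<theta>
      = (\<chi> a. \<integral>\<omega>. Y \<omega> * intercept_regressor (Z \<omega>) (W \<omega>) $ a \<partial>M)"
  shows "cov_mat M (\<lambda>\<omega>. vcat (Z \<omega>) (W \<omega>)) *v slope_coef \<theta> = (\<chi> l. rcov M (\<lambda>\<omega>. vcat (Z \<omega>) (W \<omega>) $ l) Y)"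
  using normal_eq_imp_cov_normal_eq(1)[OF R Y intercept_regressor_nth(1) normal_eq]
    cov_mat_intercept_regressor_mult_vec[of Z W \<theta>]
  by (auto simp: vec_eq_iff)

lemma intercept_regressor_gram_kernel:
  fixes Z :: "'a \<Rightarrow> real^'p" and W :: "'a \<Rightarrow> real^'d"
  assumes R: "\<And>a. sq_integrable M (\<lambda>\<omega>. intercept_regressor (Z \<omega>) (W \<omega>) $ a)"
    and pd: "pos_def_mat (cov_mat M (\<lambda>\<omega>. vcat (Z \<omega>) (W \<omega>)))"
    and kernel: "(\<chi> a b. \<integral>\<omega>. intercept_regressor (Z \<omega>) (W \<omega>) $ a * intercept_regressor (Z \<omega>) (W \<omega>) $ b \<partial>M) *v \<theta> = 0"
  shows "\<theta> = 0"
proof -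
  have zero: "sq_integrable M (\<lambda>\<omega>. 0)"
    by simp
  have normal_eq: "(\<chi> a b. \<integral>\<omega>. intercept_regressor (Z \<omega>) (W \<omega>) $ a * intercept_regressor (Z \<omega>) (W \<omega>) $ b \<partial>M) *v \<theta>
      = (\<chi> a. \<integral>\<omega>. 0 * intercept_regressor (Z \<omega>) (W \<omega>) $ a \<partial>M)"
    using kernel by (simp add: vec_eq_iff)
  have "cov_mat M (\<lambda>\<omega>. vcat (Z \<omega>) (W \<omega>)) *v slope_coef \<theta> = 0"
    using intercept_regressor_slope_normal_eq[OF R zero normal_eq] by (simp add: vec_eq_iff)
  then have slope: "slope_coef \<theta> = 0"
    using injD[OF pos_def_mat_inj[OF pd], of "slope_coef \<theta>" 0] by simp
  then have "slope_coef \<theta> $ Inl p = 0" "slope_coef \<theta> $ Inr j = 0" for p j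
    by simp_all
  then have "\<theta> $ Inl (Inr p) = 0" "\<theta> $ Inr j = 0" for p j
    by (simp_all add: slope_coef_def)
  then have "\<theta> $ Inl (Inl 1) = 0"
    using normal_eq_imp_cov_normal_eq(2)[OF R zero intercept_regressor_nth(1) normal_eq]
    by (simp add: sum_UNIV_sum_type prob_space)
  moreover have "slope_coef (0 :: real^((1 + 'p) + 'd)) = 0"
    by (simp add: slope_coef_def vec_eq_iff)
  ultimately show "\<theta> = 0"
    using slope by (simp add: vec_eq_iff_intercept_slope_coef[of \<theta> 0])
qed

lemma det_intercept_regressor_gram_nonzero:
  fixes Z :: "'a \<Rightarrow> real^'p" and W :: "'a \<Rightarrow> real^'d"
  assumes "\<And>a. sq_integrable M (\<lambda>\<omega>. intercept_regressor (Z \<omega>) (W \<omega>) $ a)"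
    and "pos_def_mat (cov_mat M (\<lambda>\<omega>. vcat (Z \<omega>) (W \<omega>)))"
  shows "det (\<chi> a b. \<integral>\<omega>. intercept_regressor (Z \<omega>) (W \<omega>) $ a * intercept_regressor (Z \<omega>) (W \<omega>) $ b \<partial>M) \<noteq> 0"
    (is "det ?G \<noteq> 0")
proof -
  have "inj ((*v) ?G)"
    using intercept_regressor_gram_kernel[OF assms] by (intro linear_injective_0[THEN iffD2]) auto
  then show ?thesis
    by (simp add: invertible_det_nz[symmetric] invertible_left_inverse matrix_left_invertible_injective)
qed

lemma least_squares_cov_normal_eq:
  fixes V :: "'a \<Rightarrow> real^'n"
  assumes V: "\<And>l. sq_integrable M (\<lambda>\<omega>. V \<omega> $ l)" and Y: "sq_integrable M Y"
    and min: "\<And>a' c'. (\<integral>\<omega>. (Y \<omega> - \<alpha> - (\<Sum>l\<in>UNIV. \<beta> $ l * V \<omega> $ l))^2 \<partial>M)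
                    \<le> (\<integral>\<omega>. (Y \<omega> - a' - (\<Sum>l\<in>UNIV. c' l * V \<omega> $ l))^2 \<partial>M)"
  shows "cov_mat M V *v \<beta> = (\<chi> l. rcov M (\<lambda>\<omega>. V \<omega> $ l) Y)"
proof -
  define \<epsilon> where "\<epsilon> = (\<lambda>\<omega>. Y \<omega> - \<alpha> - (\<Sum>l\<in>UNIV. \<beta> $ l * V \<omega> $ l))"
  have "is_lin_resid M UNIV (\<lambda>l \<omega>. V \<omega> $ l) Y \<epsilon>"
    unfolding is_lin_resid_def \<epsilon>_def using min by blast
  from is_lin_resid_normal_eqs[OF this Y V]
  have sq_\<epsilon>: "sq_integrable M \<epsilon>" and orth: "\<And>l. rcov M \<epsilon> (\<lambda>\<omega>. V \<omega> $ l) = 0"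
    by auto
  have sq_fit: "sq_integrable M (\<lambda>\<omega>. \<alpha> + (\<Sum>m\<in>UNIV. \<beta> $ m * V \<omega> $ m))"
    using V by (intro sq_integrable_add sq_integrable_sum sq_integrable_cmult) auto
  have "rcov M (\<lambda>\<omega>. V \<omega> $ l) Y
      = rcov M (\<lambda>\<omega>. V \<omega> $ l) (\<lambda>\<omega>. \<epsilon> \<omega> + (\<alpha> + (\<Sum>m\<in>UNIV. \<beta> $ m * V \<omega> $ m)))" for l
    by (simp add: \<epsilon>_def)
  also have "\<dots> l = rcov M (\<lambda>\<omega>. V \<omega> $ l) (\<lambda>\<omega>. \<alpha> + (\<Sum>m\<in>UNIV. \<beta> $ m * V \<omega> $ m))" for l
    using rcov_add_right[OF V sq_\<epsilon> sq_fit] orth by (simp add: rcov_commute)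
  also have "\<dots> l = (cov_mat M V *v \<beta>) $ l" for l
    using V by (simp add: rcov_affine_right cov_mat_def matrix_vector_mult_def mult.commute)
  finally show ?thesis
    by (simp add: vec_eq_iff)
qed

lemma cov_mat_add_uncorrelated:
  fixes V e :: "'a \<Rightarrow> real^'n"
  assumes V: "\<And>l. sq_integrable M (\<lambda>\<omega>. V \<omega> $ l)" and e: "\<And>l. sq_integrable M (\<lambda>\<omega>. e \<omega> $ l)"
    and uncorr: "\<And>l m. rcov M (\<lambda>\<omega>. e \<omega> $ l) (\<lambda>\<omega>. V \<omega> $ m) = 0"
  shows "cov_mat M (\<lambda>\<omega>. V \<omega> + e \<omega>) = cov_mat M V + cov_mat M e"
proof -
  have "rcov M (\<lambda>\<omega>. V \<omega> $ l + e \<omega> $ l) (\<lambda>\<omega>. V \<omega> $ m + e \<omega> $ m)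
      = rcov M (\<lambda>\<omega>. V \<omega> $ l) (\<lambda>\<omega>. V \<omega> $ m) + rcov M (\<lambda>\<omega>. e \<omega> $ l) (\<lambda>\<omega>. e \<omega> $ m)" for l m
    using V e uncorr[of l m] uncorr[of m l]
    by (simp add: rcov_add_right rcov_add_left sq_integrable_add rcov_commute[of "\<lambda>\<omega>. V \<omega> $ l"])
  then show ?thesis
    by (simp add: cov_mat_def vec_eq_iff)
qed

lemma measurement_error_uncorrelated:
  fixes Y :: "'a \<Rightarrow> real" and Z :: "'a \<Rightarrow> real^'p" and X E :: "'a \<Rightarrow> real^'d"
  assumes Y: "sq_integrable M Y" and Z: "\<And>p. sq_integrable M (\<lambda>\<omega>. Z \<omega> $ p)"
    and X: "\<And>j. sq_integrable M (\<lambda>\<omega>. X \<omega> $ j)" and E: "\<And>j. sq_integrable M (\<lambda>\<omega>. E \<omega> $ j)"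
    and indep: "indep_rv M E (\<lambda>\<omega>. (Z \<omega>, X \<omega>, Y \<omega>))"
  shows "rcov M (\<lambda>\<omega>. vcat 0 (E \<omega>) $ l) (\<lambda>\<omega>. vcat (Z \<omega>) (X \<omega>) $ m) = 0"
    and "rcov M (\<lambda>\<omega>. vcat 0 (E \<omega>) $ l) Y = 0"
proof -
  have indep_E: "rcov M (\<lambda>\<omega>. E \<omega> $ j) (\<lambda>\<omega>. g (Z \<omega>, X \<omega>, Y \<omega>)) = 0"
    if "g \<in> borel_measurable borel" and "sq_integrable M (\<lambda>\<omega>. g (Z \<omega>, X \<omega>, Y \<omega>))" for j g
    using rcov_indep_eq_0[OF indep borel_measurable_nth that(1) E that(2)] .
  have meas: "(\<lambda>t. vcat (fst t) (fst (snd t)) $ m :: real) \<in> borel_measurable borel"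
    by (intro borel_measurable_continuous_onI continuous_on_vec_lambda) (cases m; simp; intro continuous_intros)
  have "rcov M (\<lambda>\<omega>. E \<omega> $ j) (\<lambda>\<omega>. vcat (Z \<omega>) (X \<omega>) $ m) = 0" for j
    using indep_E[OF meas] Z X by (cases m) simp_all
  then show "rcov M (\<lambda>\<omega>. vcat 0 (E \<omega>) $ l) (\<lambda>\<omega>. vcat (Z \<omega>) (X \<omega>) $ m) = 0"
    by (cases l) simp_all
  have "(\<lambda>t. snd (snd t) :: real) \<in> borel_measurable borel"
    by (intro borel_measurable_continuous_onI continuous_intros)
  then show "rcov M (\<lambda>\<omega>. vcat 0 (E \<omega>) $ l) Y = 0"
    using indep_E[of "\<lambda>t. snd (snd t)"] Y by (cases l) simp_all
qed

lemma cov_mat_vcat_zero: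
  fixes E :: "'a \<Rightarrow> real^'d"
  assumes "cov_mat M E = (\<chi> i j. if i = j then a $ i else 0)"
  shows "cov_mat M (\<lambda>\<omega>. vcat (0 :: real^'p) (E \<omega>)) = diag_mat (range Inr) (case_sum (\<lambda>_. 0) (\<lambda>j. a $ j))"
proof -
  have "rcov M (\<lambda>\<omega>. E \<omega> $ i) (\<lambda>\<omega>. E \<omega> $ j) = (if i = j then a $ i else 0)" for i j
    using arg_cong[where f="\<lambda>A. A $ i $ j", OF assms] by (simp add: cov_mat_def)
  then have "cov_mat M (\<lambda>\<omega>. vcat (0 :: real^'p) (E \<omega>)) $ l $ m
      = diag_mat (range Inr) (case_sum (\<lambda>_. 0) (\<lambda>j. a $ j)) $ l $ m" for l m
    by (cases l; cases m) (simp_all add: cov_mat_def diag_mat_def)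
  then show ?thesis
    by (simp add: vec_eq_iff)
qed

lemma measurement_error_cov:
  fixes Y :: "'a \<Rightarrow> real" and Z :: "'a \<Rightarrow> real^'p" and X W E :: "'a \<Rightarrow> real^'d"
  assumes Y: "sq_integrable M Y" and Z: "\<And>p. sq_integrable M (\<lambda>\<omega>. Z \<omega> $ p)"
    and X: "\<And>j. sq_integrable M (\<lambda>\<omega>. X \<omega> $ j)" and E: "\<And>j. sq_integrable M (\<lambda>\<omega>. E \<omega> $ j)"
    and W_eq: "\<And>\<omega>. \<omega> \<in> space M \<Longrightarrow> W \<omega> = X \<omega> + E \<omega>"
    and indep: "indep_rv M E (\<lambda>\<omega>. (Z \<omega>, X \<omega>, Y \<omega>))"
    and cov_E: "cov_mat M E = (\<chi> i j. if i = j then a $ i else 0)"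
  shows "cov_mat M (\<lambda>\<omega>. vcat (Z \<omega>) (W \<omega>))
           = cov_mat M (\<lambda>\<omega>. vcat (Z \<omega>) (X \<omega>)) + diag_mat (range Inr) (case_sum (\<lambda>_. 0) (\<lambda>j. a $ j))"
    and "rcov M (\<lambda>\<omega>. vcat (Z \<omega>) (W \<omega>) $ l) Y = rcov M (\<lambda>\<omega>. vcat (Z \<omega>) (X \<omega>) $ l) Y"
proof -
  define V where "V = (\<lambda>\<omega>. vcat (Z \<omega>) (X \<omega>))"
  define e where "e = (\<lambda>\<omega>. vcat (0 :: real^'p) (E \<omega>))"
  note uncorr = measurement_error_uncorrelated[OF Y Z X E indep]
  have V: "sq_integrable M (\<lambda>\<omega>. V \<omega> $ l)" and e: "sq_integrable M (\<lambda>\<omega>. e \<omega> $ l)" for l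
    using Z X E by (cases l; simp add: V_def e_def)+
  have U_eq: "vcat (Z \<omega>) (W \<omega>) = V \<omega> + e \<omega>" if "\<omega> \<in> space M" for \<omega>
    using W_eq[OF that] by (simp add: V_def e_def vec_eq_iff vcat_def split: sum.split)
  have "rcov M (\<lambda>\<omega>. vcat (Z \<omega>) (W \<omega>) $ l) (\<lambda>\<omega>. vcat (Z \<omega>) (W \<omega>) $ m)
      = rcov M (\<lambda>\<omega>. (V \<omega> + e \<omega>) $ l) (\<lambda>\<omega>. (V \<omega> + e \<omega>) $ m)" for l m
    using U_eq by (intro rcov_cong) simp_all
  then have "cov_mat M (\<lambda>\<omega>. vcat (Z \<omega>) (W \<omega>)) = cov_mat M (\<lambda>\<omega>. V \<omega> + e \<omega>)"
    unfolding cov_mat_def by simp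
  also have "\<dots> = cov_mat M V + cov_mat M e"
    by (rule cov_mat_add_uncorrelated[OF V e]) (use uncorr(1) in \<open>simp add: V_def e_def\<close>)
  finally show "cov_mat M (\<lambda>\<omega>. vcat (Z \<omega>) (W \<omega>))
      = cov_mat M (\<lambda>\<omega>. vcat (Z \<omega>) (X \<omega>)) + diag_mat (range Inr) (case_sum (\<lambda>_. 0) (\<lambda>j. a $ j))"
    using cov_mat_vcat_zero[OF cov_E] by (simp add: V_def e_def)
  have "rcov M (\<lambda>\<omega>. vcat (Z \<omega>) (W \<omega>) $ l) Y = rcov M (\<lambda>\<omega>. V \<omega> $ l + e \<omega> $ l) Y"
    using U_eq by (intro rcov_cong) simp_all
  also have "\<dots> = rcov M (\<lambda>\<omega>. V \<omega> $ l) Y"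
    using rcov_add_left[OF V e Y] uncorr(2) by (simp add: e_def)
  finally show "rcov M (\<lambda>\<omega>. vcat (Z \<omega>) (W \<omega>) $ l) Y = rcov M (\<lambda>\<omega>. vcat (Z \<omega>) (X \<omega>) $ l) Y"
    by (simp add: V_def)
qed

lemma sq_integrable_intercept_regressor:
  assumes "\<And>p. sq_integrable M (\<lambda>\<omega>. Z \<omega> $ p)" and "\<And>j. sq_integrable M (\<lambda>\<omega>. W \<omega> $ j)"
  shows "sq_integrable M (\<lambda>\<omega>. intercept_regressor (Z \<omega>) (W \<omega>) $ b)"
proof (cases b)
  case (Inl c)
  then show ?thesis
    using assms(1) by (cases c) simp_all
qed (use assms(2) in simp)

lemma least_squares_vcat_cov_normal_eq:
  fixes Y :: "'a \<Rightarrow> real" and Z :: "'a \<Rightarrow> real^'p" and X :: "'a \<Rightarrow> real^'d"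
  assumes Y: "sq_integrable M Y" and V: "\<And>l. sq_integrable M (\<lambda>\<omega>. vcat (Z \<omega>) (X \<omega>) $ l)"
    and argmin: "\<forall>a' bZ bX.
        (\<integral>\<omega>. (1/2) * (Y \<omega> - \<alpha> - Z \<omega> \<bullet> \<beta>Z - X \<omega> \<bullet> \<beta>X)^2 \<partial>M)
        \<le> (\<integral>\<omega>. (1/2) * (Y \<omega> - a' - Z \<omega> \<bullet> bZ - X \<omega> \<bullet> bX)^2 \<partial>M)"
  shows "cov_mat M (\<lambda>\<omega>. vcat (Z \<omega>) (X \<omega>)) *v vcat \<beta>Z \<beta>X = (\<chi> l. rcov M (\<lambda>\<omega>. vcat (Z \<omega>) (X \<omega>) $ l) Y)"
proof (rule least_squares_cov_normal_eq[OF V Y])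
  fix a' c'
  have "(\<Sum>l\<in>UNIV. c l * vcat (Z \<omega>) (X \<omega>) $ l) = Z \<omega> \<bullet> (\<chi> p. c (Inl p)) + X \<omega> \<bullet> (\<chi> j. c (Inr j))"
    for c \<omega>
    by (simp add: inner_vec_def sum_UNIV_sum_type mult.commute)
  moreover have "(\<lambda>l. vcat \<beta>Z \<beta>X $ l) = (\<lambda>l. vcat (\<chi> p. \<beta>Z $ p) (\<chi> j. \<beta>X $ j) $ l)"
    by simp
  ultimately show "(\<integral>\<omega>. (Y \<omega> - \<alpha> - (\<Sum>l\<in>UNIV. vcat \<beta>Z \<beta>X $ l * vcat (Z \<omega>) (X \<omega>) $ l))^2 \<partial>M)
      \<le> (\<integral>\<omega>. (Y \<omega> - a' - (\<Sum>l\<in>UNIV. c' l * vcat (Z \<omega>) (X \<omega>) $ l))^2 \<partial>M)"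
    using argmin[rule_format, of a' "\<chi> p. c' (Inl p)" "\<chi> j. c' (Inr j)"]
    by (simp add: diff_diff_eq add.assoc)
qed

lemma population_ols_coef_le:
  fixes Y :: "'a \<Rightarrow> real" and Z :: "'a \<Rightarrow> real^'p" and X W E :: "'a \<Rightarrow> real^'d"
  assumes Y: "sq_integrable M Y" and Z: "\<And>p. sq_integrable M (\<lambda>\<omega>. Z \<omega> $ p)"
    and X: "\<And>j. sq_integrable M (\<lambda>\<omega>. X \<omega> $ j)" and W: "\<And>j. sq_integrable M (\<lambda>\<omega>. W \<omega> $ j)"
    and E: "\<And>j. sq_integrable M (\<lambda>\<omega>. E \<omega> $ j)"
    and argmin: "\<forall>a' bZ bX.
        (\<integral>\<omega>. (1/2) * (Y \<omega> - \<alpha> - Z \<omega> \<bullet> \<beta>Z - X \<omega> \<bullet> \<beta>X)^2 \<partial>M)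
        \<le> (\<integral>\<omega>. (1/2) * (Y \<omega> - a' - Z \<omega> \<bullet> bZ - X \<omega> \<bullet> bX)^2 \<partial>M)"
    and pdZW: "pos_def_mat (cov_mat M (\<lambda>\<omega>. vcat (Z \<omega>) (W \<omega>)))"
    and pdZX: "pos_def_mat (cov_mat M (\<lambda>\<omega>. vcat (Z \<omega>) (X \<omega>)))"
    and pairwise_PC: "\<forall>j j'. j \<noteq> j' \<longrightarrow>
        partial_corr M (UNIV - {Inr j, Inr j'}) (\<lambda>k \<omega>. vcat (Z \<omega>) (X \<omega>) $ k)
          (\<lambda>\<omega>. X \<omega> $ j) (\<lambda>\<omega>. X \<omega> $ j') > 0"
    and W_eq: "\<forall>\<omega>\<in>space M. W \<omega> = X \<omega> + E \<omega>"
    and indep: "indep_rv M E (\<lambda>\<omega>. (Z \<omega>, X \<omega>, Y \<omega>))"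
    and cov_E: "cov_mat M E = (\<chi> i j. if i = j then a $ i else 0)"
    and a_nonneg: "\<forall>j. a $ j \<ge> 0"
    and no_benefit: "\<forall>j. \<beta>X $ j \<le> 0"
    and zero: "\<beta>X $ j0 = 0"
  defines "G \<equiv> \<chi> a b. \<integral>\<omega>. intercept_regressor (Z \<omega>) (W \<omega>) $ a * intercept_regressor (Z \<omega>) (W \<omega>) $ b \<partial>M"
    and "r \<equiv> \<chi> a. \<integral>\<omega>. Y \<omega> * intercept_regressor (Z \<omega>) (W \<omega>) $ a \<partial>M"
  shows "det G \<noteq> 0" and "cramer_solve G r $ Inr j0 \<le> \<beta>X $ j0"
proof -
  define V where "V = (\<lambda>\<omega>. vcat (Z \<omega>) (X \<omega>))"
  have V: "sq_integrable M (\<lambda>\<omega>. V \<omega> $ l)" for l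
    using Z X by (cases l) (simp_all add: V_def)
  note R = sq_integrable_intercept_regressor[OF Z W]
  show det: "det G \<noteq> 0"
    unfolding G_def by (rule det_intercept_regressor_gram_nonzero[OF R pdZW])
  define \<theta> where "\<theta> = cramer_solve G r"
  have "G *v \<theta> = r"
    using cramer_solve_eq_iff[OF det] by (simp add: \<theta>_def)
  from intercept_regressor_slope_normal_eq[OF R Y this[unfolded G_def r_def]]
  have "(cov_mat M V + diag_mat (range Inr) (case_sum (\<lambda>_. 0) (\<lambda>j. a $ j))) *v slope_coef \<theta>
      = cov_mat M V *v vcat \<beta>Z \<beta>X"
    using measurement_error_cov[OF Y Z X E _ indep cov_E] W_eq
      least_squares_vcat_cov_normal_eq[OF Y V[unfolded V_def] argmin]
    by (simp add: V_def vec_eq_iff)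
  moreover have "inverse_offdiag_nonpos (range Inr) (cov_mat M V)"
  proof (rule partial_corr_pos_imp_inverse_offdiag_nonpos[OF V pdZX[folded V_def]])
    fix i k :: "'p + 'd" assume "i \<in> range Inr" "k \<in> range Inr" "i \<noteq> k"
    then obtain j j' where "i = Inr j" "k = Inr j'" "j \<noteq> j'"
      by auto
    then show "partial_corr M (UNIV - {i, k}) (\<lambda>l \<omega>. V \<omega> $ l) (\<lambda>\<omega>. V \<omega> $ i) (\<lambda>\<omega>. V \<omega> $ k) > 0"
      using pairwise_PC by (simp add: V_def)
  qed
  ultimately have "slope_coef \<theta> $ Inr j0 \<le> vcat \<beta>Z \<beta>X $ Inr j0"
    using pdZX a_nonneg no_benefit zero
    by (intro add_diag_mat_solution_le[where J="range Inr"]) (auto simp: V_def)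
  then show "cramer_solve G r $ Inr j0 \<le> \<beta>X $ j0"
    by (simp add: slope_coef_def \<theta>_def)
qed

end

lemma intercept_regressor_coord_mem:
  "(\<lambda>t. intercept_regressor (fst (snd t)) (snd (snd (snd t))) $ a) \<in> insert (\<lambda>_. 1) coord_funs"
proof (cases a)
  case (Inl c)
  then show ?thesis
    by (cases c) (auto simp: coord_funs_def)
qed (auto simp: coord_funs_def)

lemma ols_intercept_regressor_conv_in_prob:
  fixes M :: "'a measure" and Y :: "'a \<Rightarrow> real" and Z :: "'a \<Rightarrow> real^'p" and X W :: "'a \<Rightarrow> real^'d"
    and Ys :: "nat \<Rightarrow> 'a \<Rightarrow> real" and Zs :: "nat \<Rightarrow> 'a \<Rightarrow> real^'p" and Xs Ws :: "nat \<Rightarrow> 'a \<Rightarrow> real^'d"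
  defines "G \<equiv> \<chi> a b. \<integral>\<omega>. intercept_regressor (Z \<omega>) (W \<omega>) $ a * intercept_regressor (Z \<omega>) (W \<omega>) $ b \<partial>M"
    and "r \<equiv> \<chi> a. \<integral>\<omega>. Y \<omega> * intercept_regressor (Z \<omega>) (W \<omega>) $ a \<partial>M"
  assumes "prob_space M"
    and smeas: "\<forall>i. Ys i \<in> borel_measurable M \<and> Zs i \<in> borel_measurable M \<and>
                    Xs i \<in> borel_measurable M \<and> Ws i \<in> borel_measurable M"
    and mom1: "\<forall>f\<in>coord_funs. conv_in_prob M
        (\<lambda>N \<omega>. (\<Sum>i<N. f (Ys i \<omega>, Zs i \<omega>, Xs i \<omega>, Ws i \<omega>)) / real N)
        (\<integral>\<omega>. f (Y \<omega>, Z \<omega>, X \<omega>, W \<omega>) \<partial>M)"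
    and mom2: "\<forall>f\<in>coord_funs. \<forall>g\<in>coord_funs. conv_in_prob M
        (\<lambda>N \<omega>. (\<Sum>i<N. f (Ys i \<omega>, Zs i \<omega>, Xs i \<omega>, Ws i \<omega>) * g (Ys i \<omega>, Zs i \<omega>, Xs i \<omega>, Ws i \<omega>)) / real N)
        (\<integral>\<omega>. f (Y \<omega>, Z \<omega>, X \<omega>, W \<omega>) * g (Y \<omega>, Z \<omega>, X \<omega>, W \<omega>) \<partial>M)"
    and det: "det G \<noteq> 0"
  shows "conv_in_prob M (\<lambda>N \<omega>. ols_coef (\<lambda>i. intercept_regressor (Zs i \<omega>) (Ws i \<omega>)) (\<lambda>i. Ys i \<omega>) N)
           (cramer_solve G r)"
proof (rule ols_coef_conv_in_prob[OF \<open>prob_space M\<close> _ _ _ _ det])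
  note moment = sample_moment_conv_in_prob[OF \<open>prob_space M\<close> mom1 mom2]
  show "(\<lambda>\<omega>. intercept_regressor (Zs i \<omega>) (Ws i \<omega>)) \<in> borel_measurable M" for i
  proof (rule borel_measurable_vecI)
    fix a :: "(1 + 'p) + 'd"
    show "(\<lambda>\<omega>. intercept_regressor (Zs i \<omega>) (Ws i \<omega>) $ a) \<in> borel_measurable M"
    proof (cases a)
      case (Inl c)
      then show ?thesis
        using smeas by (cases c) (auto intro: borel_measurable_vec_nth)
    qed (use smeas in \<open>auto intro: borel_measurable_vec_nth\<close>)
  qed
  show "Ys i \<in> borel_measurable M" for i
    using smeas by blast
  show "conv_in_prob M (\<lambda>N \<omega>. (\<Sum>i<N. intercept_regressor (Zs i \<omega>) (Ws i \<omega>) $ a * intercept_regressor (Zs i \<omega>) (Ws i \<omega>) $ b) / real N)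
      (G $ a $ b)" for a b
    using moment[OF intercept_regressor_coord_mem intercept_regressor_coord_mem] by (simp add: G_def)
  have "fst \<in> insert (\<lambda>_. 1) coord_funs"
    by (simp add: coord_funs_def)
  from moment[OF this intercept_regressor_coord_mem]
  show "conv_in_prob M (\<lambda>N \<omega>. (\<Sum>i<N. Ys i \<omega> * intercept_regressor (Zs i \<omega>) (Ws i \<omega>) $ a) / real N) (r $ a)" for a
    by (simp add: r_def)
qed

theorem corollary2:
  fixes M :: "'a measure"
    and Y :: "'a \<Rightarrow> real" and Z :: "'a \<Rightarrow> real^'p" and X W :: "'a \<Rightarrow> real^'d"
    and Ys :: "nat \<Rightarrow> 'a \<Rightarrow> real" and Zs :: "nat \<Rightarrow> 'a \<Rightarrow> real^'p"
    and Xs Ws :: "nat \<Rightarrow> 'a \<Rightarrow> real^'d"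
    and \<alpha> :: real and \<beta>Z :: "real^'p" and \<beta>X :: "real^'d"
    and E :: "'a \<Rightarrow> real^'d" and a :: "real^'d" and j0 :: 'd
  assumes P: "prob_space M"
    and meas: "Y \<in> borel_measurable M" "Z \<in> borel_measurable M"
              "X \<in> borel_measurable M" "W \<in> borel_measurable M"
    and sq: "integrable M (\<lambda>\<omega>. (Y \<omega>)^2)" "\<forall>j. integrable M (\<lambda>\<omega>. (Z \<omega> $ j)^2)"
            "\<forall>j. integrable M (\<lambda>\<omega>. (X \<omega> $ j)^2)" "\<forall>j. integrable M (\<lambda>\<omega>. (W \<omega> $ j)^2)"
    and argmin: "\<forall>a' bZ bX.
        (\<integral>\<omega>. (1/2) * (Y \<omega> - \<alpha> - Z \<omega> \<bullet> \<beta>Z - X \<omega> \<bullet> \<beta>X)^2 \<partial>M)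
        \<le> (\<integral>\<omega>. (1/2) * (Y \<omega> - a' - Z \<omega> \<bullet> bZ - X \<omega> \<bullet> bX)^2 \<partial>M)"
    and smeas: "\<forall>i. Ys i \<in> borel_measurable M \<and> Zs i \<in> borel_measurable M \<and>
                    Xs i \<in> borel_measurable M \<and> Ws i \<in> borel_measurable M"
    and ident: "\<forall>i. distr M borel (\<lambda>\<omega>. (Ys i \<omega>, Zs i \<omega>, Xs i \<omega>, Ws i \<omega>))
                   = distr M borel (\<lambda>\<omega>. (Y \<omega>, Z \<omega>, X \<omega>, W \<omega>))"
    and mom1: "\<forall>f\<in>coord_funs. conv_in_prob M
        (\<lambda>N \<omega>. (\<Sum>i<N. f (Ys i \<omega>, Zs i \<omega>, Xs i \<omega>, Ws i \<omega>)) / real N)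
        (\<integral>\<omega>. f (Y \<omega>, Z \<omega>, X \<omega>, W \<omega>) \<partial>M)"
    and mom2: "\<forall>f\<in>coord_funs. \<forall>g\<in>coord_funs. conv_in_prob M
        (\<lambda>N \<omega>. (\<Sum>i<N. f (Ys i \<omega>, Zs i \<omega>, Xs i \<omega>, Ws i \<omega>) * g (Ys i \<omega>, Zs i \<omega>, Xs i \<omega>, Ws i \<omega>)) / real N)
        (\<integral>\<omega>. f (Y \<omega>, Z \<omega>, X \<omega>, W \<omega>) * g (Y \<omega>, Z \<omega>, X \<omega>, W \<omega>) \<partial>M)"
    and uncorr: "\<forall>i j. rcov M (\<lambda>\<omega>. Ys i \<omega> - \<alpha> - Zs i \<omega> \<bullet> \<beta>Z - Xs i \<omega> \<bullet> \<beta>X)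
                              (\<lambda>\<omega>. Ws i \<omega> $ j - Xs i \<omega> $ j) = 0"
    and pdZW: "pos_def_mat (cov_mat M (\<lambda>\<omega>. vcat (Z \<omega>) (W \<omega>)))"
    and pdZX: "pos_def_mat (cov_mat M (\<lambda>\<omega>. vcat (Z \<omega>) (X \<omega>)))"
    and pairwise_PC: "\<forall>j j'. j \<noteq> j' \<longrightarrow>
        partial_corr M (UNIV - {Inr j, Inr j'}) (\<lambda>k \<omega>. vcat (Z \<omega>) (X \<omega>) $ k)
          (\<lambda>\<omega>. X \<omega> $ j) (\<lambda>\<omega>. X \<omega> $ j') > 0"
    and cume_W: "\<forall>\<omega>\<in>space M. W \<omega> = X \<omega> + E \<omega>"
    and cume_meas: "E \<in> borel_measurable M"
    and cume_indep: "indep_rv M E (\<lambda>\<omega>. (Z \<omega>, X \<omega>, Y \<omega>))"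
    and cume_cov: "cov_mat M E = (\<chi> i j. if i = j then a $ i else 0)"
    and cume_nonneg: "\<forall>j. a $ j \<ge> 0"
    and no_benefit: "\<forall>j. \<beta>X $ j \<le> 0"
    and zero: "\<beta>X $ j0 = 0"
  shows "\<exists>b. conv_in_prob M
            (\<lambda>N \<omega>. (\<chi> j. ols_coef (\<lambda>i. vcat (vcat (vec 1 :: real^1) (Zs i \<omega>)) (Ws i \<omega>))
                                  (\<lambda>i. Ys i \<omega>) N $ Inr j) - \<beta>X) b
          \<and> b $ j0 \<le> 0"
proof -
  interpret prob_space M
    by (rule P)
  have Y: "sq_integrable M Y"
    using meas(1) sq(1) by (simp add: sq_integrable_def)
  have Z: "sq_integrable M (\<lambda>\<omega>. Z \<omega> $ p)" and X: "sq_integrable M (\<lambda>\<omega>. X \<omega> $ j)"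
    and W: "sq_integrable M (\<lambda>\<omega>. W \<omega> $ j)" for p j
    using meas sq by (simp_all add: sq_integrable_vec_nth)
  have E: "sq_integrable M (\<lambda>\<omega>. E \<omega> $ j)" for j
    using cume_W by (intro sq_integrable_cong[OF _ borel_measurable_vec_nth[OF cume_meas] sq_integrable_diff[OF W[of j] X[of j]]])
      simp
  define G where "G = (\<chi> a b. \<integral>\<omega>. intercept_regressor (Z \<omega>) (W \<omega>) $ a * intercept_regressor (Z \<omega>) (W \<omega>) $ b \<partial>M)"
  define r where "r = (\<chi> a. \<integral>\<omega>. Y \<omega> * intercept_regressor (Z \<omega>) (W \<omega>) $ a \<partial>M)"
  note limit = population_ols_coef_le[OF Y Z X W E argmin pdZW pdZX pairwise_PC cume_W cume_indep cume_cov
      cume_nonneg no_benefit zero, folded G_def r_def]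
  note ols = ols_intercept_regressor_conv_in_prob[OF P smeas mom1 mom2 limit(1)[unfolded G_def], folded G_def r_def]
  let ?h = "\<lambda>\<theta>::real^((1 + 'p) + 'd). (\<chi> j. \<theta> $ Inr j) - \<beta>X"
  have h: "continuous_on UNIV ?h"
    by (intro continuous_intros continuous_on_vec_lambda continuous_on_component)
  have "conv_in_prob M
      (\<lambda>N \<omega>. ?h (ols_coef (\<lambda>i. intercept_regressor (Zs i \<omega>) (Ws i \<omega>)) (\<lambda>i. Ys i \<omega>) N)) (?h (cramer_solve G r))"
    using h by (intro conv_in_prob_isCont[OF P ols])
      (simp_all add: continuous_on_eq_continuous_at borel_measurable_continuous_onI)
  then show ?thesis
    using limit(2) unfolding intercept_regressor_def by (intro exI[of _ "?h (cramer_solve G r)"]) simp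
qed

end
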